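(* Let $f:\mathbb{R}^d\to\mathbb{R}$ be $\beta$-smooth with minimum value $f^\star$, and run AdaSGD (as defined in the context) for $T$ steps with parameters $\eta,\gamma>0$ using a stochastic gradient oracle with bounded affine noise with parameters $\sigma_0,\sigma_1\ge0$. Let $\delta\in(0,1)$. Then with probability at least $1-2\delta$, for all $1\le t\le T$, $$\sum_{s=1}^t\eta_{s-1}^2\|\nabla f(w_s)-g_s\|^2\le2\eta^2\log\big(1+\sigma^2T/(2\gamma^2)\big)+7\eta_0^2\sigma^2\log(T/\delta),$$ where $\sigma^2=\sigma_0^2+2\beta\sigma_1^2F$, with $\Delta_1=f(w_1)-f^\star$, $C_1=\log\big(1+\frac{2\sigma_0^2T+8(1+\sigma_1^2)(\eta^2\beta^2T^3+\beta\Delta_1T)}{\gamma^2}\big)$ and $F=2\Delta_1+(3\log\frac T\delta+4C_1)\eta\sigma_0+(9\log^2\frac T\delta+16C_1^2)\eta^2\beta\sigma_1^2+\eta^2\beta C_1$.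
   Context: $\|\cdot\|$ is the Euclidean norm and $\log$ the base-2 logarithm. $\beta$-smooth: $\|\nabla f(x)-\nabla f(y)\|\le\beta\|x-y\|$. Oracle: queried at $w$, returns random $g(w)$ with $\mathbb{E}[g(w)\mid w]=\nabla f(w)$ and, with probability one, $\|g(w)-\nabla f(w)\|^2\le\sigma_0^2+\sigma_1^2\|\nabla f(w)\|^2$. AdaSGD: arbitrary $w_1$; for $t=1,\dots,T$, $g_t=g(w_t)$ a fresh oracle answer ($\mathbb{E}[g_t\mid g_1,\dots,g_{t-1}]=\nabla f(w_t)$), $\eta_t=\eta/\sqrt{\gamma^2+\sum_{s=1}^t\|g_s\|^2}$ (so $\eta_0=\eta/\gamma$), $w_{t+1}=w_t-\eta_tg_t$. *)

theory Defs
  imports "HOL-Probability.Probability"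
begin

text \<open>AdaSGD. The oracle answers are random vectors g t (t = 1, 2, ...) on a
probability space; everything else is a deterministic function of them.\<close>

definition ada_eta :: "real \<Rightarrow> real \<Rightarrow> (nat \<Rightarrow> 'b \<Rightarrow> 'a::euclidean_space) \<Rightarrow> nat \<Rightarrow> 'b \<Rightarrow> real" where
  "ada_eta \<eta> \<gamma> g t \<omega> = \<eta> / sqrt (\<gamma>\<^sup>2 + (\<Sum>s=1..t. (norm (g s \<omega>))\<^sup>2))"

text \<open>Iterates: ada_w ... t is w_t for t \<ge> 1 (index 0 is unused and set to w_1).\<close>
fun ada_w :: "real \<Rightarrow> real \<Rightarrow> 'a::euclidean_space \<Rightarrow> (nat \<Rightarrow> 'b \<Rightarrow> 'a) \<Rightarrow> nat \<Rightarrow> 'b \<Rightarrow> 'a" where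
  "ada_w \<eta> \<gamma> w1 g 0 \<omega> = w1"
| "ada_w \<eta> \<gamma> w1 g (Suc 0) \<omega> = w1"
| "ada_w \<eta> \<gamma> w1 g (Suc (Suc t)) \<omega> =
     ada_w \<eta> \<gamma> w1 g (Suc t) \<omega> - ada_eta \<eta> \<gamma> g (Suc t) \<omega> *\<^sub>R g (Suc t) \<omega>"

definition hist :: "'b measure \<Rightarrow> (nat \<Rightarrow> 'b \<Rightarrow> 'a::euclidean_space) \<Rightarrow> nat \<Rightarrow> 'b measure" where
  "hist M g t = sigma (space M) (\<Union>s\<in>{1..<t}. {g s -` A \<inter> space M | A. A \<in> sets borel})"

end

theory Submission
  imports Defs
begin

text \<open>The stepsize \<open>\<eta>\<^sub>t\<close> depends on \<open>g\<^sub>t\<close>, so it is compared with a proxy stepsize that is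
  determined before \<open>g\<^sub>t\<close> is drawn; the error of the comparison is paid for by the noise bound.
  The descent lemma then bounds the optimality gap \<open>f w\<^sub>t - f\<^sup>\<star>\<close> by a telescoping sum whose
  only random part is the martingale with increments \<open>proxy stepsize \<times> \<langle>\<nabla>f w\<^sub>s, \<xi>\<^sub>s\<rangle>\<close>, where
  \<open>\<xi>\<^sub>s = g\<^sub>s - \<nabla>f w\<^sub>s\<close>. A Freedman-type exponential supermartingale inequality controls this
  martingale with probability \<open>1 - \<delta>\<close>, and an induction on \<open>t\<close> keeps every gap below \<open>F\<close>,
  hence every noise level below \<open>\<sigma>\<close>. A second application of the inequality, to the increments
  \<open>\<langle>\<nabla>f w\<^sub>s, \<xi>\<^sub>s\<rangle>\<close>, shows that \<open>\<Sum>\<^sub>s \<parallel>g\<^sub>s\<parallel>\<^sup>2\<close> dominates \<open>\<Sum>\<^sub>s \<parallel>\<xi>\<^sub>s\<parallel>\<^sup>2\<close> up to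
  \<open>2 \<sigma>\<^sup>2 ln (T / \<delta>)\<close>. The claimed bound then follows from a summation lemma for
  \<open>\<Sum>\<^sub>s x\<^sub>s / (c + Y (s - 1))\<close>, whose denominators lag behind the partial sums of the \<open>x\<^sub>s\<close>.\<close>

section \<open>Smooth functions\<close>

lemma smooth_descent:
  fixes f :: "'a::real_inner \<Rightarrow> real" and grad :: "'a \<Rightarrow> 'a"
  assumes grad: "\<And>x. (f has_derivative (\<lambda>h. grad x \<bullet> h)) (at x)"
    and smooth: "\<And>x y. norm (grad x - grad y) \<le> \<beta> * norm (x - y)"
  shows "f y \<le> f x + grad x \<bullet> (y - x) + \<beta> / 2 * (norm (y - x))\<^sup>2"
proof -
  define d where "d = y - x"
  define \<psi> where "\<psi> \<tau> = f (x + \<tau> *\<^sub>R d) - \<tau> * (grad x \<bullet> d) - \<beta> / 2 * \<tau>\<^sup>2 * (norm d)\<^sup>2" for \<tau>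
  have der: "(\<psi> has_real_derivative (grad (x + \<tau> *\<^sub>R d) - grad x) \<bullet> d - \<beta> * \<tau> * (norm d)\<^sup>2) (at \<tau>)"
    for \<tau>
  proof -
    have "((\<lambda>\<tau>. x + \<tau> *\<^sub>R d) has_derivative (\<lambda>h. h *\<^sub>R d)) (at \<tau>)"
      by (auto intro!: derivative_eq_intros)
    from has_derivative_compose[OF this grad]
    have "((\<lambda>\<tau>. f (x + \<tau> *\<^sub>R d)) has_real_derivative grad (x + \<tau> *\<^sub>R d) \<bullet> d) (at \<tau>)"
      by (simp add: has_field_derivative_def mult_commute_abs)
    then show ?thesis
      unfolding \<psi>_def by (auto intro!: derivative_eq_intros simp: power2_eq_square inner_diff_left)
  qed
  have "\<psi> 1 \<le> \<psi> 0"
  proof (rule DERIV_nonpos_imp_nonincreasing[of 0 1])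
    fix \<tau> :: real assume "0 \<le> \<tau>" "\<tau> \<le> 1"
    have "(grad (x + \<tau> *\<^sub>R d) - grad x) \<bullet> d \<le> norm (grad (x + \<tau> *\<^sub>R d) - grad x) * norm d"
      by (rule norm_cauchy_schwarz)
    also have "\<dots> \<le> \<beta> * norm (\<tau> *\<^sub>R d) * norm d"
      using smooth[of "x + \<tau> *\<^sub>R d" x] by (intro mult_right_mono) auto
    also have "\<dots> = \<beta> * \<tau> * (norm d)\<^sup>2"
      using \<open>0 \<le> \<tau>\<close> by (simp add: power2_eq_square)
    finally have "(grad (x + \<tau> *\<^sub>R d) - grad x) \<bullet> d - \<beta> * \<tau> * (norm d)\<^sup>2 \<le> 0"
      by simp
    with der show "\<exists>y. (\<psi> has_real_derivative y) (at \<tau>) \<and> y \<le> 0" by blast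
  qed simp
  then show ?thesis unfolding \<psi>_def d_def by simp
qed

lemma lipschitz_constant_nonneg:
  fixes grad :: "'a::euclidean_space \<Rightarrow> 'b::real_normed_vector"
  assumes "\<And>x y. norm (grad x - grad y) \<le> \<beta> * norm (x - y)"
  shows "\<beta> \<ge> 0"
proof -
  obtain b :: 'a where "b \<in> Basis" using nonempty_Basis by blast
  have "0 \<le> norm (grad b - grad 0)" by simp
  also have "\<dots> \<le> \<beta> * norm b" using assms[of b 0] by simp
  finally show ?thesis using \<open>b \<in> Basis\<close> by simp
qed

lemma smooth_norm_grad_sq_le:
  fixes f :: "'a::euclidean_space \<Rightarrow> real" and grad :: "'a \<Rightarrow> 'a"
  assumes grad: "\<And>x. (f has_derivative (\<lambda>h. grad x \<bullet> h)) (at x)"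
    and smooth: "\<And>x y. norm (grad x - grad y) \<le> \<beta> * norm (x - y)"
    and lower: "\<And>x. fstar \<le> f x"
  shows "(norm (grad x))\<^sup>2 \<le> 2 * \<beta> * (f x - fstar)"
proof (cases "\<beta> = 0")
  case True
  show ?thesis
  proof (rule ccontr)
    assume "\<not> ?thesis"
    then have pos: "(norm (grad x))\<^sup>2 > 0" using True by simp
    define \<tau> where "\<tau> = (f x - fstar + 1) / (norm (grad x))\<^sup>2"
    \<comment> \<open>With \<open>\<beta> = 0\<close> the function decreases linearly along \<open>-grad x\<close> and drops below \<open>fstar\<close>.\<close>
    have "f (x - \<tau> *\<^sub>R grad x) \<le> f x - \<tau> * (norm (grad x))\<^sup>2"
      using smooth_descent[OF grad smooth, of "x - \<tau> *\<^sub>R grad x" x] True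
      by (simp add: power2_norm_eq_inner)
    also have "\<dots> = fstar - 1" unfolding \<tau>_def using pos by simp
    finally show False using lower[of "x - \<tau> *\<^sub>R grad x"] by simp
  qed
next
  case False
  then have \<beta>: "\<beta> > 0" using lipschitz_constant_nonneg[OF smooth] by simp
  define y where "y = x - (1/\<beta>) *\<^sub>R grad x"
  have "fstar \<le> f y" by (rule lower)
  also have "\<dots> \<le> f x + grad x \<bullet> (y - x) + \<beta> / 2 * (norm (y - x))\<^sup>2"
    by (rule smooth_descent[OF grad smooth])
  also have "\<dots> = f x - (norm (grad x))\<^sup>2 / (2 * \<beta>)"
    unfolding y_def using \<beta> by (simp add: dot_square_norm power2_eq_square field_simps)
  finally show ?thesis using \<beta> by (simp add: field_simps)
qed

section \<open>Elementary inequalities\<close>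

lemma norm_add_sq_le:
  fixes a b :: "'a::real_normed_vector"
  shows "(norm (a + b))\<^sup>2 \<le> 2 * (norm a)\<^sup>2 + 2 * (norm b)\<^sup>2"
proof -
  have "(norm (a + b))\<^sup>2 \<le> (norm a + norm b)\<^sup>2"
    by (intro power_mono norm_triangle_ineq) auto
  also have "\<dots> \<le> 2 * (norm a)\<^sup>2 + 2 * (norm b)\<^sup>2"
    using sum_squares_ge_zero[of "norm a - norm b" 0] by (simp add: power2_eq_square algebra_simps)
  finally show ?thesis .
qed

lemma ln_le_log2:
  assumes "y \<ge> 1"
  shows "ln y \<le> log 2 y"
proof -
  have "ln y * ln 2 \<le> ln y" using assms ln_2_less_1 by (simp add: mult_left_le)
  then show ?thesis unfolding log_def by (simp add: field_simps)
qed

lemma ln_add_one_le_log2_half: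
  assumes "y \<ge> 0"
  shows "ln (1 + y) \<le> 2 * log 2 (1 + y / 2)"
proof -
  have "1 + y \<le> (1 + y / 2)\<^sup>2" by (simp add: power2_eq_square algebra_simps)
  then have "ln (1 + y) \<le> ln ((1 + y / 2)\<^sup>2)" using assms by simp
  also have "\<dots> = 2 * ln (1 + y / 2)" using assms by (simp add: ln_realpow)
  also have "\<dots> \<le> 2 * log 2 (1 + y / 2)" using assms by (simp add: ln_le_log2)
  finally show ?thesis .
qed

lemma abs_sqrt_add_diff_le:
  fixes c u v :: real
  assumes "c \<ge> 0" "u \<ge> 0" "v \<ge> 0"
  shows "\<bar>sqrt (c + u) - sqrt (c + v)\<bar> \<le> \<bar>sqrt u - sqrt v\<bar>"
proof -
  have "sqrt (c + v) - sqrt (c + u) \<le> sqrt v - sqrt u" if "0 \<le> u" "u \<le> v" for u v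
  proof (cases "v = 0")
    case False
    then have pos: "sqrt v + sqrt u > 0" using that by (simp add: add_pos_nonneg)
    have le: "sqrt v + sqrt u \<le> sqrt (c + v) + sqrt (c + u)"
      using assms that by (intro add_mono) auto
    \<comment> \<open>Both differences are \<open>v - u\<close> divided by the sum of the two roots.\<close>
    have "sqrt (c + v) - sqrt (c + u) = (v - u) / (sqrt (c + v) + sqrt (c + u))"
      using assms that pos le by (simp add: field_simps)
    also have "\<dots> \<le> (v - u) / (sqrt v + sqrt u)"
      using pos le that by (intro divide_left_mono) auto
    also have "\<dots> = sqrt v - sqrt u" using pos that by (simp add: field_simps)
    finally show ?thesis .
  qed (use that in simp)
  from this[of u v] this[of v u] assms show ?thesis by (cases "u \<le> v") (auto simp: abs_if)
qed

lemma sum_div_partial_sums_le_ln: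
  fixes a :: "nat \<Rightarrow> real" and c :: real
  assumes c: "c > 0" and a: "\<And>s. a s \<ge> 0"
  shows "(\<Sum>s=1..t. a s / (c + (\<Sum>r=1..s. a r))) \<le> ln ((c + (\<Sum>r=1..t. a r)) / c)"
proof (induction t)
  case (Suc t)
  define A where "A = c + (\<Sum>r=1..t. a r)"
  have A: "A > 0" "A + a (Suc t) > 0"
    unfolding A_def using c a by (auto simp: add_pos_nonneg sum_nonneg)
  have "(\<Sum>s=1..Suc t. a s / (c + (\<Sum>r=1..s. a r)))
      = (\<Sum>s=1..t. a s / (c + (\<Sum>r=1..s. a r))) + a (Suc t) / (A + a (Suc t))"
    by (simp add: A_def add.assoc)
  also have "\<dots> \<le> ln (A / c) + (ln (A + a (Suc t)) - ln A)"
    using Suc.IH ln_le_minus_one[of "A / (A + a (Suc t))"] A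
    by (intro add_mono) (auto simp: A_def ln_div field_simps)
  also have "\<dots> = ln ((c + (\<Sum>r=1..Suc t. a r)) / c)"
    using A c by (simp add: ln_div A_def add.assoc)
  finally show ?case .
qed (use c in simp)

lemma capped_log_potential_increment:
  fixes a b P c :: real
  assumes "0 \<le> a" "a \<le> b" "P \<ge> 0" "c > 0"
  defines "\<Phi> \<equiv> \<lambda>X. min X P / c + ln ((c + max 0 (X - P)) / c)"
  shows "(b - a) / (c + max 0 (b - P)) \<le> \<Phi> b - \<Phi> a"
proof -
  define D where "D = c + max 0 (b - P)"
  define Da where "Da = c + max 0 (a - P)"
  have D: "D \<ge> c" "Da > 0" "Da \<le> D" unfolding D_def Da_def using assms by auto
  have 1: "(min b P - min a P) / D \<le> (min b P - min a P) / c"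
    using D assms by (intro divide_left_mono) (auto simp: min_def)
  have 2: "(D - Da) / D \<le> ln D - ln Da"
    using ln_le_minus_one[of "Da / D"] D assms by (simp add: ln_div field_simps)
  have "\<Phi> b - \<Phi> a = (min b P - min a P) / c + (ln D - ln Da)"
    unfolding \<Phi>_def D_def Da_def using assms D unfolding D_def Da_def
    by (simp add: ln_div diff_divide_distrib)
  moreover have "(b - a) / D = (min b P - min a P) / D + (D - Da) / D"
    unfolding D_def Da_def by (simp add: add_divide_distrib[symmetric] min_def max_def)
  ultimately show ?thesis using 1 2 unfolding D_def[symmetric] by linarith
qed

lemma sum_div_lagged_partial_sums_le:
  fixes x Y :: "nat \<Rightarrow> real" and c S K :: real
  assumes c: "c > 0" and S: "S \<ge> 0" and K: "K \<ge> 0"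
    and x: "\<And>s. 1 \<le> s \<Longrightarrow> s \<le> t \<Longrightarrow> 0 \<le> x s \<and> x s \<le> S"
    and Y: "\<And>s. s < t \<Longrightarrow> Y s \<ge> (\<Sum>r=1..s. x r) - K \<and> Y s \<ge> 0"
  shows "(\<Sum>s=1..t. x s / (c + Y (s - 1))) \<le> (K + S) / c + ln (1 + t * S / c)"
proof -
  define P where "P = K + S"
  define \<Phi> where "\<Phi> X = min X P / c + ln ((c + max 0 (X - P)) / c)" for X
  define X where "X s = (\<Sum>r=1..s. x r)" for s
  have P: "P \<ge> 0" unfolding P_def using S K by simp
  have X_nonneg: "X s \<ge> 0" if "s \<le> t" for s unfolding X_def using x that by (intro sum_nonneg) auto
  have X_le: "X t \<le> t * S"
    using sum_mono[of "{1..t}" x "\<lambda>_. S"] x unfolding X_def by auto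
  have step: "x (Suc r) / (c + Y r) \<le> \<Phi> (X (Suc r)) - \<Phi> (X r)" if r: "r < t" for r
  proof -
    have xr: "0 \<le> x (Suc r)" "x (Suc r) \<le> S" using x r by auto
    have XS: "X (Suc r) = X r + x (Suc r)" unfolding X_def by simp
    have "max 0 (X (Suc r) - P) \<le> Y r" using Y[OF r] xr XS unfolding P_def X_def by (simp add: max_def)
    then have "x (Suc r) / (c + Y r) \<le> x (Suc r) / (c + max 0 (X (Suc r) - P))"
      using xr c by (intro divide_left_mono) auto
    also have "\<dots> = (X (Suc r) - X r) / (c + max 0 (X (Suc r) - P))" using XS by simp
    also have "\<dots> \<le> \<Phi> (X (Suc r)) - \<Phi> (X r)"
      unfolding \<Phi>_def using X_nonneg[of r] r XS xr P c by (intro capped_log_potential_increment) auto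
    finally show ?thesis .
  qed
  have "(\<Sum>s=1..t. x s / (c + Y (s - 1))) = (\<Sum>r<t. x (Suc r) / (c + Y r))"
    by (simp add: sum.atLeast1_atMost_eq)
  also have "\<dots> \<le> (\<Sum>r<t. \<Phi> (X (Suc r)) - \<Phi> (X r))" using step by (intro sum_mono) auto
  also have "\<dots> = \<Phi> (X t) - \<Phi> (X 0)" by (rule sum_lessThan_telescope)
  also have "\<Phi> (X 0) = 0" unfolding \<Phi>_def X_def using P c by simp
  also have "\<Phi> (X t) \<le> P / c + ln ((c + X t) / c)"
    unfolding \<Phi>_def using P c X_nonneg[of t]
    by (intro add_mono divide_right_mono) (auto simp: min_def max_def intro!: divide_right_mono)
  also have "ln ((c + X t) / c) \<le> ln (1 + t * S / c)"
  proof -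
    have "X t / c \<le> t * S / c" using X_le c by (intro divide_right_mono) auto
    moreover have "0 \<le> X t / c" using X_nonneg[of t] c by simp
    ultimately show ?thesis using c by (simp add: add_divide_distrib)
  qed
  finally show ?thesis unfolding P_def by simp
qed

lemma cosh_le_exp_half_sq: "cosh (a::real) \<le> exp (a\<^sup>2 / 2)"
proof -
  have "cosh b \<le> exp (b\<^sup>2 / 2)" if b: "b \<ge> 0" for b :: real
  proof -
    \<comment> \<open>Hoeffding's lemma for the symmetric two-point distribution on \<open>{-b, b}\<close>.\<close>
    have "- (2 * b) * (1 / 2) + ln (1 + (1 / 2) * (exp (2 * b) - 1)) \<le> (2 * b)\<^sup>2 / 8"
      using Hoeffdings_lemma_aux[of "2 * b" "1 / 2"] b by simp
    then have "ln ((1 + exp (2 * b)) / 2) \<le> b + b\<^sup>2 / 2"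
      by (simp add: power2_eq_square field_simps)
    moreover have "(1 + exp (2 * b)) / 2 > 0" by (simp add: add_pos_pos)
    ultimately have "(1 + exp (2 * b)) / 2 \<le> exp (b + b\<^sup>2 / 2)"
      by (metis exp_le_cancel_iff exp_ln)
    then have "exp (- b) * ((1 + exp (2 * b)) / 2) \<le> exp (- b) * exp (b + b\<^sup>2 / 2)"
      by simp
    moreover have "cosh b = exp (- b) * ((1 + exp (2 * b)) / 2)"
      unfolding cosh_field_def by (simp add: field_simps exp_add[symmetric])
    ultimately show ?thesis by (simp add: exp_add[symmetric])
  qed
  from this[of a] this[of "- a"] show ?thesis by (cases "a \<ge> 0") auto
qed

lemma exp_le_cosh_add_sinh_div:
  fixes z a :: real
  assumes "\<bar>z\<bar> \<le> a"
  shows "exp z \<le> cosh a + z * (sinh a / a)"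
proof (cases "a = 0")
  case False
  then have a: "a > 0" using assms by simp
  \<comment> \<open>Convexity of \<open>exp\<close> on \<open>[-a, a]\<close>, with \<open>z\<close> written as a convex combination of \<open>-a\<close> and \<open>a\<close>.\<close>
  define t where "t = (a + z) / (2 * a)"
  have t: "0 \<le> t" "t \<le> 1" unfolding t_def using assms a by (auto simp: field_simps abs_le_iff)
  have "exp ((1 - t) *\<^sub>R (- a) + t *\<^sub>R a) \<le> (1 - t) * exp (- a) + t * exp a"
    using convex_onD[OF exp_convex t, of "- a" a] by simp
  moreover have "(1 - t) *\<^sub>R (- a) + t *\<^sub>R a = z" unfolding t_def using a by (simp add: field_simps)
  moreover have "(1 - t) * exp (- a) + t * exp a = cosh a + z * (sinh a / a)"
    unfolding t_def cosh_def sinh_def using a by (simp add: field_simps)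
  ultimately show ?thesis by simp
qed (use assms in simp)

lemma sinh_div_self_bounds:
  fixes a :: real
  assumes "a \<ge> 0"
  shows "0 \<le> sinh a / a" "sinh a / a \<le> exp a"
proof -
  show "0 \<le> sinh a / a" using assms by simp
  have "exp a - exp (- a) \<le> 2 * a * exp a"
    using exp_ge_add_one_self[of "- 2 * a"] mult_left_mono[of "1 - 2 * a" "exp (- 2 * a)" "exp a"]
    by (simp add: algebra_simps exp_add[symmetric])
  then show "sinh a / a \<le> exp a"
    using assms by (cases "a = 0") (auto simp: sinh_def field_simps)
qed

lemma exp_sub_half_sq_le:
  fixes z a :: real
  assumes "\<bar>z\<bar> \<le> a"
  shows "exp (z - a\<^sup>2 / 2) \<le> 1 + exp (- a\<^sup>2 / 2) * (sinh a / a) * z"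
proof -
  have "exp (z - a\<^sup>2 / 2) = exp (- a\<^sup>2 / 2) * exp z" by (simp add: exp_add[symmetric])
  also have "\<dots> \<le> exp (- a\<^sup>2 / 2) * (cosh a + z * (sinh a / a))"
    using exp_le_cosh_add_sinh_div[OF assms] by simp
  also have "\<dots> \<le> 1 + exp (- a\<^sup>2 / 2) * (sinh a / a) * z"
    using cosh_le_exp_half_sq[of a] by (simp add: algebra_simps exp_minus field_simps)
  finally show ?thesis .
qed

section \<open>Exponential supermartingales\<close>

lemma (in prob_space) integrable_mult_exp_sub_half_sq:
  fixes Q z b :: "'a \<Rightarrow> real"
  assumes [measurable]: "Q \<in> borel_measurable M" "z \<in> borel_measurable M" "b \<in> borel_measurable M"
    and Q_bound: "AE \<omega> in M. 0 \<le> Q \<omega> \<and> Q \<omega> \<le> C"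
    and z_bound: "AE \<omega> in M. \<bar>z \<omega>\<bar> \<le> b \<omega> \<and> b \<omega> \<le> B"
  shows "integrable M (\<lambda>\<omega>. Q \<omega> * exp (z \<omega> - (b \<omega>)\<^sup>2 / 2))"
proof (rule integrable_const_bound[of _ "C * exp B"])
  show "AE \<omega> in M. norm (Q \<omega> * exp (z \<omega> - (b \<omega>)\<^sup>2 / 2)) \<le> C * exp B"
    using Q_bound z_bound
  proof eventually_elim
    case (elim \<omega>)
    then have "z \<omega> - (b \<omega>)\<^sup>2 / 2 \<le> B"
      using abs_ge_self[of "z \<omega>"] zero_le_power2[of "b \<omega>"] by linarith
    with elim show ?case by (auto simp: abs_mult intro!: mult_mono)
  qed
qed measurable

lemma (in prob_space) integral_exp_centered_increment_le:
  fixes N :: "'a measure" and Q z b :: "'a \<Rightarrow> real"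
  assumes N: "subalgebra M N"
    and Q_N: "Q \<in> borel_measurable N" and Q_bound: "AE \<omega> in M. 0 \<le> Q \<omega> \<and> Q \<omega> \<le> C"
    and b_N: "b \<in> borel_measurable N"
    and z_M: "z \<in> borel_measurable M" and z_bound: "AE \<omega> in M. \<bar>z \<omega>\<bar> \<le> b \<omega> \<and> b \<omega> \<le> B"
    and centered: "\<And>K. K \<in> borel_measurable N \<Longrightarrow> \<exists>D. AE \<omega> in M. \<bar>K \<omega>\<bar> \<le> D \<Longrightarrow>
                          (\<integral>\<omega>. K \<omega> * z \<omega> \<partial>M) = 0"
  shows "integrable M (\<lambda>\<omega>. Q \<omega> * exp (z \<omega> - (b \<omega>)\<^sup>2 / 2))"
    and "(\<integral>\<omega>. Q \<omega> * exp (z \<omega> - (b \<omega>)\<^sup>2 / 2) \<partial>M) \<le> (\<integral>\<omega>. Q \<omega> \<partial>M)"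
proof -
  have Q_M [measurable]: "Q \<in> borel_measurable M" and b_M [measurable]: "b \<in> borel_measurable M"
    using measurable_from_subalg[OF N] Q_N b_N by auto
  note [measurable] = z_M
  \<comment> \<open>Convexity gives \<open>Q exp (z - b\<^sup>2/2) \<le> Q + K z\<close> with an \<open>N\<close>-measurable slope \<open>K\<close>, and \<open>K z\<close> is centered.\<close>
  define K where "K \<omega> = Q \<omega> * exp (- (b \<omega>)\<^sup>2 / 2) * (sinh (b \<omega>) / b \<omega>)" for \<omega>
  have K_N: "K \<in> borel_measurable N"
    unfolding K_def sinh_field_def using Q_N b_N by measurable
  have K_bound: "AE \<omega> in M. \<bar>K \<omega>\<bar> \<le> C * exp B"
    using Q_bound z_bound
  proof eventually_elim
    case (elim \<omega>)
    then have b: "0 \<le> b \<omega>" by linarith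
    have "0 \<le> K \<omega>"
      unfolding K_def using elim sinh_div_self_bounds(1)[OF b] by (intro mult_nonneg_nonneg) auto
    moreover have "K \<omega> \<le> C * 1 * exp B"
      unfolding K_def using elim sinh_div_self_bounds[OF b]
      by (intro mult_mono) (auto intro: order_trans[of _ "exp (b \<omega>)"])
    ultimately show ?case by simp
  qed
  have "integrable M Q" using Q_bound by (intro integrable_const_bound[of _ C]) auto
  moreover have "integrable M (\<lambda>\<omega>. K \<omega> * z \<omega>)"
  proof (rule integrable_const_bound[of _ "C * exp B * B"])
    show "AE \<omega> in M. norm (K \<omega> * z \<omega>) \<le> C * exp B * B"
      using K_bound z_bound by eventually_elim (auto simp: abs_mult intro!: mult_mono)
  qed (use measurable_from_subalg[OF N K_N] in measurable)
  moreover have "(\<integral>\<omega>. K \<omega> * z \<omega> \<partial>M) = 0" using K_N K_bound by (blast intro: centered)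
  moreover have "AE \<omega> in M. Q \<omega> * exp (z \<omega> - (b \<omega>)\<^sup>2 / 2) \<le> Q \<omega> + K \<omega> * z \<omega>"
    using Q_bound z_bound
  proof eventually_elim
    case (elim \<omega>)
    then have "Q \<omega> * exp (z \<omega> - (b \<omega>)\<^sup>2 / 2)
        \<le> Q \<omega> * (1 + exp (- (b \<omega>)\<^sup>2 / 2) * (sinh (b \<omega>) / b \<omega>) * z \<omega>)"
      by (intro mult_left_mono exp_sub_half_sq_le) auto
    then show ?case unfolding K_def by (simp add: algebra_simps)
  qed
  moreover show "integrable M (\<lambda>\<omega>. Q \<omega> * exp (z \<omega> - (b \<omega>)\<^sup>2 / 2))"
    using Q_M z_M b_M Q_bound z_bound by (rule integrable_mult_exp_sub_half_sq)
  ultimately show "(\<integral>\<omega>. Q \<omega> * exp (z \<omega> - (b \<omega>)\<^sup>2 / 2) \<partial>M) \<le> (\<integral>\<omega>. Q \<omega> \<partial>M)"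
    using integral_mono_AE[of M _ "\<lambda>\<omega>. Q \<omega> + K \<omega> * z \<omega>"] by simp
qed

text \<open>\<open>F s\<close> is the information available before step \<open>s\<close>.\<close>

locale bounded_martingale_differences = prob_space M for M :: "'a measure" +
  fixes F :: "nat \<Rightarrow> 'a measure" and Z b :: "nat \<Rightarrow> 'a \<Rightarrow> real" and B :: real and T :: nat
  assumes subalgebra: "\<And>s. s \<in> {1..T} \<Longrightarrow> subalgebra M (F s)"
    and Z_measurable: "\<And>s. s \<in> {1..T} \<Longrightarrow> Z s \<in> borel_measurable M"
    and Z_adapted: "\<And>r s. 1 \<le> r \<Longrightarrow> r < s \<Longrightarrow> s \<le> T \<Longrightarrow> Z r \<in> borel_measurable (F s)"
    and b_predictable: "\<And>r s. 1 \<le> r \<Longrightarrow> r \<le> s \<Longrightarrow> s \<le> T \<Longrightarrow> b r \<in> borel_measurable (F s)"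
    and bounded: "\<And>s. s \<in> {1..T} \<Longrightarrow> AE \<omega> in M. \<bar>Z s \<omega>\<bar> \<le> b s \<omega> \<and> b s \<omega> \<le> B"
    and centered: "\<And>s K. s \<in> {1..T} \<Longrightarrow> K \<in> borel_measurable (F s) \<Longrightarrow>
                     \<exists>D. AE \<omega> in M. \<bar>K \<omega>\<bar> \<le> D \<Longrightarrow> (\<integral>\<omega>. K \<omega> * Z s \<omega> \<partial>M) = 0"
begin

definition exponent :: "nat \<Rightarrow> 'a \<Rightarrow> real" where
  "exponent t \<omega> = (\<Sum>s=1..t. Z s \<omega> - (b s \<omega>)\<^sup>2 / 2)"

lemma exponent_measurable: "t \<le> T \<Longrightarrow> exponent t \<in> borel_measurable M"
  unfolding exponent_def[abs_def]
  using Z_measurable measurable_from_subalg[OF subalgebra b_predictable]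
  by (intro borel_measurable_sum borel_measurable_diff) auto

lemma exponent_adapted: "t < s \<Longrightarrow> s \<le> T \<Longrightarrow> exponent t \<in> borel_measurable (F s)"
  unfolding exponent_def[abs_def] using Z_adapted b_predictable
  by (intro borel_measurable_sum borel_measurable_diff) auto

lemma exponent_le: "t \<le> T \<Longrightarrow> AE \<omega> in M. exponent t \<omega> \<le> t * B"
proof -
  assume t: "t \<le> T"
  have "AE \<omega> in M. \<forall>s\<in>{1..t}. \<bar>Z s \<omega>\<bar> \<le> b s \<omega> \<and> b s \<omega> \<le> B"
    using t bounded by (intro AE_finite_allI) auto
  then show ?thesis
  proof eventually_elim
    case (elim \<omega>)
    have "exponent t \<omega> \<le> (\<Sum>s=1..t. B)"
      unfolding exponent_def
    proof (rule sum_mono)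
      fix s assume "s \<in> {1..t}"
      with elim have "\<bar>Z s \<omega>\<bar> \<le> b s \<omega>" "b s \<omega> \<le> B" by auto
      then show "Z s \<omega> - (b s \<omega>)\<^sup>2 / 2 \<le> B"
        using abs_ge_self[of "Z s \<omega>"] zero_le_power2[of "b s \<omega>"] by linarith
    qed
    then show ?case by simp
  qed
qed

lemma integral_exp_exponent_le_1:
  "t \<le> T \<Longrightarrow> integrable M (\<lambda>\<omega>. exp (exponent t \<omega>)) \<and> (\<integral>\<omega>. exp (exponent t \<omega>) \<partial>M) \<le> 1"
proof (induction t)
  case 0
  then show ?case by (simp add: exponent_def prob_space)
next
  case (Suc t)
  then have s: "Suc t \<in> {1..T}" by simp
  have "exponent t \<in> borel_measurable (F (Suc t))" using s by (intro exponent_adapted) auto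
  then have Q_F: "(\<lambda>\<omega>. exp (exponent t \<omega>)) \<in> borel_measurable (F (Suc t))" by measurable
  have Q_bound: "AE \<omega> in M. 0 \<le> exp (exponent t \<omega>) \<and> exp (exponent t \<omega>) \<le> exp (t * B)"
    using exponent_le[of t] Suc.prems by (auto elim!: eventually_mono)
  have b_F: "b (Suc t) \<in> borel_measurable (F (Suc t))" using s by (intro b_predictable) auto
  note step = integral_exp_centered_increment_le[OF subalgebra[OF s] Q_F Q_bound b_F
      Z_measurable[OF s] bounded[OF s] centered[OF s]]
  have "exp (exponent (Suc t) \<omega>) = exp (exponent t \<omega>) * exp (Z (Suc t) \<omega> - (b (Suc t) \<omega>)\<^sup>2 / 2)"
    for \<omega> by (simp add: exponent_def exp_add)
  with step Suc show ?case by simp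
qed

lemma prob_exponent_ge_le:
  assumes "t \<le> T"
  shows "prob {\<omega>\<in>space M. c \<le> exponent t \<omega>} \<le> exp (- c)"
proof -
  note int = integral_exp_exponent_le_1[OF assms]
  have "prob {\<omega>\<in>space M. c \<le> exponent t \<omega>} = prob {\<omega>\<in>space M. exp c \<le> exp (exponent t \<omega>)}"
    by simp
  also have "\<dots> \<le> (\<integral>\<omega>. exp (exponent t \<omega>) \<partial>M) / exp c"
    using int by (intro integral_Markov_inequality_measure[where A = "space M"]) auto
  also have "\<dots> \<le> exp (- c)" using int by (simp add: exp_minus divide_right_mono field_simps)
  finally show ?thesis .
qed

lemma prob_exists_exponent_ge_le:
  "prob {\<omega>\<in>space M. \<exists>t\<in>{1..T}. c \<le> exponent t \<omega>} \<le> T * exp (- c)"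
proof -
  have [measurable]: "exponent t \<in> borel_measurable M" if "t \<in> {1..T}" for t
    using that by (intro exponent_measurable) auto
  have "prob {\<omega>\<in>space M. \<exists>t\<in>{1..T}. c \<le> exponent t \<omega>}
      = prob (\<Union>t\<in>{1..T}. {\<omega>\<in>space M. c \<le> exponent t \<omega>})"
    by (rule arg_cong[where f = prob]) auto
  also have "\<dots> \<le> (\<Sum>t\<in>{1..T}. prob {\<omega>\<in>space M. c \<le> exponent t \<omega>})"
    by (intro finite_measure_subadditive_finite) auto
  also have "\<dots> \<le> (\<Sum>t\<in>{1..T}. exp (- c))"
    by (intro sum_mono prob_exponent_ge_le) auto
  finally show ?thesis by simp
qed

end

section \<open>The history of the oracle answers\<close>

lemma space_hist [simp]: "space (hist M g t) = space M"
  unfolding hist_def by (rule space_measure_of_conv)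

lemma sets_hist:
  "sets (hist M g t) =
     sigma_sets (space M) (\<Union>s\<in>{1..<t}. {g s -` A \<inter> space M | A. A \<in> sets borel})"
  unfolding hist_def by (rule sets_measure_of) auto

lemma measurable_hist:
  fixes g :: "nat \<Rightarrow> 'b \<Rightarrow> 'a::euclidean_space"
  assumes "1 \<le> s" "s < t"
  shows "g s \<in> borel_measurable (hist M g t)"
proof (rule measurableI)
  fix A :: "'a set" assume "A \<in> sets borel"
  with assms show "g s -` A \<inter> space (hist M g t) \<in> sets (hist M g t)"
    unfolding sets_hist by (intro sigma_sets.Basic UN_I[of s]) auto
qed simp

lemma subalgebra_hist:
  fixes g :: "nat \<Rightarrow> 'b \<Rightarrow> 'a::euclidean_space"
  assumes "\<And>s. 1 \<le> s \<Longrightarrow> s < t \<Longrightarrow> g s \<in> borel_measurable M"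
  shows "subalgebra M (hist M g t)"
  unfolding subalgebra_def sets_hist using assms
  by (auto intro!: sets.sigma_sets_subset measurable_sets)

section \<open>AdaSGD\<close>

locale adasgd =
  fixes M :: "'b measure"
    and f :: "'a::euclidean_space \<Rightarrow> real" and grad :: "'a \<Rightarrow> 'a"
    and g :: "nat \<Rightarrow> 'b \<Rightarrow> 'a"
    and w1 :: 'a
    and \<beta> fstar \<eta> \<gamma> \<sigma>0 \<sigma>1 \<delta> :: real and T :: nat
  assumes prob_space_M: "prob_space M"
    and grad: "\<And>x. (f has_derivative (\<lambda>h. grad x \<bullet> h)) (at x)"
    and smooth: "\<And>x y. norm (grad x - grad y) \<le> \<beta> * norm (x - y)"
    and fstar_le: "\<And>x. fstar \<le> f x"
    and \<eta>_pos: "\<eta> > 0" and \<gamma>_pos: "\<gamma> > 0" and \<sigma>0_nonneg: "\<sigma>0 \<ge> 0" and \<sigma>1_nonneg: "\<sigma>1 \<ge> 0"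
    and \<delta>_pos: "0 < \<delta>" and \<delta>_less_1: "\<delta> < 1"
    and g_measurable: "\<And>t. t \<in> {1..T} \<Longrightarrow> g t \<in> borel_measurable M"
    and g_integrable: "\<And>t. t \<in> {1..T} \<Longrightarrow> integrable M (g t)"
    and unbiased: "\<And>t u. t \<in> {1..T} \<Longrightarrow>
        AE \<omega> in M. real_cond_exp M (hist M g t) (\<lambda>\<omega>. g t \<omega> \<bullet> u) \<omega>
                     = grad (ada_w \<eta> \<gamma> w1 g t \<omega>) \<bullet> u"
    and noise: "\<And>t. t \<in> {1..T} \<Longrightarrow>
        AE \<omega> in M. (norm (g t \<omega> - grad (ada_w \<eta> \<gamma> w1 g t \<omega>)))\<^sup>2
                     \<le> \<sigma>0\<^sup>2 + \<sigma>1\<^sup>2 * (norm (grad (ada_w \<eta> \<gamma> w1 g t \<omega>)))\<^sup>2"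

sublocale adasgd \<subseteq> prob_space M by (rule prob_space_M)

context adasgd
begin

abbreviation w :: "nat \<Rightarrow> 'b \<Rightarrow> 'a" where "w t \<equiv> ada_w \<eta> \<gamma> w1 g t"

abbreviation stepsize :: "nat \<Rightarrow> 'b \<Rightarrow> real" where "stepsize t \<equiv> ada_eta \<eta> \<gamma> g t"

definition G :: "nat \<Rightarrow> 'b \<Rightarrow> real" where "G t \<omega> = (\<Sum>s=1..t. (norm (g s \<omega>))\<^sup>2)"

definition \<xi> :: "nat \<Rightarrow> 'b \<Rightarrow> 'a" where "\<xi> t \<omega> = g t \<omega> - grad (w t \<omega>)"

definition noise_level :: "nat \<Rightarrow> 'b \<Rightarrow> real" where
  "noise_level t \<omega> = sqrt (\<sigma>0\<^sup>2 + \<sigma>1\<^sup>2 * (norm (grad (w t \<omega>)))\<^sup>2)"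

text \<open>The stepsize of step \<open>t\<close> with the unknown \<open>\<parallel>g t\<parallel>\<^sup>2\<close> replaced by an upper bound on its
  conditional expectation; unlike \<open>stepsize t\<close> it is determined by the history before step \<open>t\<close>.\<close>

definition proxy_stepsize :: "nat \<Rightarrow> 'b \<Rightarrow> real" where
  "proxy_stepsize t \<omega> =
     \<eta> / sqrt (\<gamma>\<^sup>2 + G (t - 1) \<omega> + (norm (grad (w t \<omega>)))\<^sup>2 + (noise_level t \<omega>)\<^sup>2)"

definition gap :: "nat \<Rightarrow> 'b \<Rightarrow> real" where "gap t \<omega> = f (w t \<omega>) - fstar"

definition bounded_noise :: "'b \<Rightarrow> bool" where
  "bounded_noise \<omega> \<longleftrightarrow> (\<forall>s\<in>{1..T}. norm (\<xi> s \<omega>) \<le> noise_level s \<omega>)"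

definition "\<Delta>1 = f w1 - fstar"
definition "G_max = 2 * \<sigma>0\<^sup>2 * T + 8 * (1 + \<sigma>1\<^sup>2) * (\<eta>\<^sup>2 * \<beta>\<^sup>2 * T ^ 3 + \<beta> * \<Delta>1 * T)"
definition "C1 = log 2 (1 + G_max / \<gamma>\<^sup>2)"
definition "L = log 2 (T / \<delta>)"
definition "F = 2 * \<Delta>1 + (3 * L + 4 * C1) * \<eta> * \<sigma>0
                 + (9 * L\<^sup>2 + 16 * C1\<^sup>2) * \<eta>\<^sup>2 * \<beta> * \<sigma>1\<^sup>2 + \<eta>\<^sup>2 * \<beta> * C1"
definition "\<sigma>sq = \<sigma>0\<^sup>2 + 2 * \<beta> * \<sigma>1\<^sup>2 * F"
definition "\<sigma> = sqrt \<sigma>sq"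

text \<open>Crude a priori bounds; they are only needed for integrability.\<close>

definition "grad_max = norm (grad w1) + \<beta> * \<eta> * T"
definition "noise_max = \<sigma>0 + \<sigma>1 * grad_max"

lemma \<beta>_nonneg: "\<beta> \<ge> 0"
  using lipschitz_constant_nonneg[OF smooth] .

lemma G_nonneg: "G t \<omega> \<ge> 0"
  unfolding G_def by (auto intro!: sum_nonneg)

lemma G_mono: "t \<le> u \<Longrightarrow> G t \<omega> \<le> G u \<omega>"
  unfolding G_def by (intro sum_mono2) auto

lemma norm_g_sq_le_G: "1 \<le> t \<Longrightarrow> (norm (g t \<omega>))\<^sup>2 \<le> G t \<omega>"
  unfolding G_def by (intro member_le_sum) auto

lemma G_pred: "1 \<le> t \<Longrightarrow> G t \<omega> = G (t - 1) \<omega> + (norm (g t \<omega>))\<^sup>2"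
  unfolding G_def by (cases t) auto

lemma stepsize_eq: "stepsize t \<omega> = \<eta> / sqrt (\<gamma>\<^sup>2 + G t \<omega>)"
  unfolding ada_eta_def G_def ..

lemma \<gamma>_sq_add_G_pos: "\<gamma>\<^sup>2 + G t \<omega> > 0"
  using \<gamma>_pos G_nonneg[of t \<omega>] by (simp add: add_pos_nonneg)

lemma stepsize_pos: "stepsize t \<omega> > 0"
  unfolding stepsize_eq using \<eta>_pos \<gamma>_sq_add_G_pos[of t \<omega>] by simp

lemma stepsize_sq: "(stepsize t \<omega>)\<^sup>2 = \<eta>\<^sup>2 / (\<gamma>\<^sup>2 + G t \<omega>)"
  unfolding stepsize_eq using \<gamma>_sq_add_G_pos[of t \<omega>] by (simp add: power_divide)

lemma w_Suc: "1 \<le> t \<Longrightarrow> w (Suc t) \<omega> = w t \<omega> - stepsize t \<omega> *\<^sub>R g t \<omega>"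
  by (cases t) auto

lemma norm_step_le: "1 \<le> t \<Longrightarrow> norm (stepsize t \<omega> *\<^sub>R g t \<omega>) \<le> \<eta>"
proof -
  assume t: "1 \<le> t"
  have "norm (g t \<omega>) \<le> sqrt (\<gamma>\<^sup>2 + G t \<omega>)"
    using norm_g_sq_le_G[OF t, of \<omega>] by (intro real_le_rsqrt) (simp add: add_increasing)
  then show ?thesis
    unfolding stepsize_eq using \<eta>_pos \<gamma>_sq_add_G_pos[of t \<omega>]
    by (simp add: divide_le_eq mult_left_mono)
qed

lemma norm_w_sub_w1_le: "norm (w t \<omega> - w1) \<le> \<eta> * t"
proof (induction t)
  case (Suc t)
  show ?case
  proof (cases "t = 0")
    case False
    then have "w (Suc t) \<omega> - w1 = (w t \<omega> - w1) - stepsize t \<omega> *\<^sub>R g t \<omega>"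
      using w_Suc[of t \<omega>] by simp
    then have "norm (w (Suc t) \<omega> - w1) \<le> norm (w t \<omega> - w1) + norm (stepsize t \<omega> *\<^sub>R g t \<omega>)"
      by (metis norm_triangle_ineq4)
    also have "\<dots> \<le> \<eta> * t + \<eta>" using Suc.IH norm_step_le[of t \<omega>] False by simp
    finally show ?thesis by (simp add: algebra_simps)
  qed (use \<eta>_pos in simp)
qed simp

lemma norm_grad_w_le: "t \<le> T \<Longrightarrow> norm (grad (w t \<omega>)) \<le> grad_max"
proof -
  assume t: "t \<le> T"
  have "norm (grad (w t \<omega>)) \<le> norm (grad w1) + norm (grad (w t \<omega>) - grad w1)"
    by (rule norm_triangle_sub)
  also have "norm (grad (w t \<omega>) - grad w1) \<le> \<beta> * (\<eta> * t)"
    using smooth[of "w t \<omega>" w1] norm_w_sub_w1_le[of t \<omega>] \<beta>_nonneg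
    by (meson mult_left_mono order_trans)
  also have "\<beta> * (\<eta> * t) \<le> \<beta> * (\<eta> * T)"
    using t \<beta>_nonneg \<eta>_pos by (intro mult_left_mono) auto
  finally show ?thesis unfolding grad_max_def by (simp add: mult.assoc)
qed

lemma noise_level_nonneg: "noise_level t \<omega> \<ge> 0"
  unfolding noise_level_def by simp

lemma noise_level_sq: "(noise_level t \<omega>)\<^sup>2 = \<sigma>0\<^sup>2 + \<sigma>1\<^sup>2 * (norm (grad (w t \<omega>)))\<^sup>2"
  unfolding noise_level_def by simp

lemma noise_level_le_noise_max: "t \<le> T \<Longrightarrow> noise_level t \<omega> \<le> noise_max"
proof -
  assume t: "t \<le> T"
  have "noise_level t \<omega> \<le> sqrt (\<sigma>0\<^sup>2) + sqrt (\<sigma>1\<^sup>2 * (norm (grad (w t \<omega>)))\<^sup>2)"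
    unfolding noise_level_def by (intro sqrt_add_le_add_sqrt) auto
  also have "\<dots> = \<sigma>0 + \<sigma>1 * norm (grad (w t \<omega>))"
    using \<sigma>0_nonneg \<sigma>1_nonneg by (simp add: real_sqrt_mult)
  also have "\<dots> \<le> noise_max"
    unfolding noise_max_def using norm_grad_w_le[OF t] \<sigma>1_nonneg by (simp add: mult_left_mono)
  finally show ?thesis .
qed

lemma AE_bounded_noise: "AE \<omega> in M. bounded_noise \<omega>"
  unfolding bounded_noise_def
proof (rule AE_finite_allI)
  fix t assume "t \<in> {1..T}"
  from noise[OF this] show "AE \<omega> in M. norm (\<xi> t \<omega>) \<le> noise_level t \<omega>"
  proof (rule eventually_mono)
    fix \<omega> assume "(norm (g t \<omega> - grad (w t \<omega>)))\<^sup>2 \<le> \<sigma>0\<^sup>2 + \<sigma>1\<^sup>2 * (norm (grad (w t \<omega>)))\<^sup>2"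
    then have "(norm (\<xi> t \<omega>))\<^sup>2 \<le> (noise_level t \<omega>)\<^sup>2" unfolding noise_level_sq \<xi>_def .
    then show "norm (\<xi> t \<omega>) \<le> noise_level t \<omega>" using noise_level_nonneg by (rule power2_le_imp_le)
  qed
qed simp

lemma abs_inner_noise_le:
  assumes "bounded_noise \<omega>" "s \<in> {1..T}"
  shows "\<bar>v \<bullet> \<xi> s \<omega>\<bar> \<le> norm v * noise_level s \<omega>"
proof -
  have "\<bar>v \<bullet> \<xi> s \<omega>\<bar> \<le> norm v * norm (\<xi> s \<omega>)" by (rule Cauchy_Schwarz_ineq2)
  also have "\<dots> \<le> norm v * noise_level s \<omega>"
    using assms unfolding bounded_noise_def by (intro mult_left_mono) auto
  finally show ?thesis .
qed

lemma G_eq_sum_grad_noise: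
  "G t \<omega> = (\<Sum>s=1..t. (norm (grad (w s \<omega>)))\<^sup>2) + 2 * (\<Sum>s=1..t. grad (w s \<omega>) \<bullet> \<xi> s \<omega>)
             + (\<Sum>s=1..t. (norm (\<xi> s \<omega>))\<^sup>2)"
proof -
  have "(norm (g s \<omega>))\<^sup>2
      = (norm (grad (w s \<omega>)))\<^sup>2 + 2 * (grad (w s \<omega>) \<bullet> \<xi> s \<omega>) + (norm (\<xi> s \<omega>))\<^sup>2" for s
  proof -
    have "g s \<omega> = grad (w s \<omega>) + \<xi> s \<omega>" by (simp add: \<xi>_def)
    then show ?thesis
      by (simp add: power2_norm_eq_inner inner_add_left inner_add_right inner_commute)
  qed
  then show ?thesis unfolding G_def by (simp add: sum.distrib sum_distrib_left)
qed

lemma \<Delta>1_nonneg: "\<Delta>1 \<ge> 0"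
  unfolding \<Delta>1_def using fstar_le[of w1] by simp

lemma norm_g_sq_le:
  assumes s: "s \<le> T" and noise: "norm (\<xi> s \<omega>) \<le> noise_level s \<omega>"
  shows "(norm (g s \<omega>))\<^sup>2 \<le> 2 * \<sigma>0\<^sup>2 + 2 * (1 + \<sigma>1\<^sup>2) * (4 * \<beta> * \<Delta>1 + 2 * \<beta>\<^sup>2 * \<eta>\<^sup>2 * T\<^sup>2)"
proof -
  have "(norm (g s \<omega>))\<^sup>2 \<le> 2 * (norm (grad (w s \<omega>)))\<^sup>2 + 2 * (norm (\<xi> s \<omega>))\<^sup>2"
    using norm_add_sq_le[of "grad (w s \<omega>)" "\<xi> s \<omega>"] by (simp add: \<xi>_def)
  also have "(norm (\<xi> s \<omega>))\<^sup>2 \<le> (noise_level s \<omega>)\<^sup>2" using noise by (simp add: power_mono)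
  finally have g_le: "(norm (g s \<omega>))\<^sup>2 \<le> 2 * \<sigma>0\<^sup>2 + 2 * (1 + \<sigma>1\<^sup>2) * (norm (grad (w s \<omega>)))\<^sup>2"
    unfolding noise_level_sq by (simp add: algebra_simps)
  have "(norm (grad (w s \<omega>)))\<^sup>2 \<le> (norm (grad w1) + \<beta> * \<eta> * T)\<^sup>2"
    using norm_grad_w_le[OF s] unfolding grad_max_def by (simp add: power_mono)
  also have "\<dots> \<le> 2 * (norm (grad w1))\<^sup>2 + 2 * (\<beta> * \<eta> * T)\<^sup>2"
    using norm_add_sq_le[of "norm (grad w1)" "\<beta> * \<eta> * T"] by simp
  also have "(norm (grad w1))\<^sup>2 \<le> 2 * \<beta> * \<Delta>1"
    unfolding \<Delta>1_def by (rule smooth_norm_grad_sq_le[OF grad smooth fstar_le])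
  finally have "(norm (grad (w s \<omega>)))\<^sup>2 \<le> 4 * \<beta> * \<Delta>1 + 2 * \<beta>\<^sup>2 * \<eta>\<^sup>2 * T\<^sup>2"
    by (simp add: power_mult_distrib)
  then have "2 * (1 + \<sigma>1\<^sup>2) * (norm (grad (w s \<omega>)))\<^sup>2
      \<le> 2 * (1 + \<sigma>1\<^sup>2) * (4 * \<beta> * \<Delta>1 + 2 * \<beta>\<^sup>2 * \<eta>\<^sup>2 * T\<^sup>2)"
    by (rule mult_left_mono) (simp add: add_nonneg_nonneg)
  with g_le show ?thesis by linarith
qed

lemma G_le_G_max:
  assumes "bounded_noise \<omega>" "t \<le> T"
  shows "G t \<omega> \<le> G_max"
proof -
  have "G t \<omega> \<le> G T \<omega>" using assms(2) by (rule G_mono)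
  also have "\<dots> \<le> T * (2 * \<sigma>0\<^sup>2 + 2 * (1 + \<sigma>1\<^sup>2) * (4 * \<beta> * \<Delta>1 + 2 * \<beta>\<^sup>2 * \<eta>\<^sup>2 * T\<^sup>2))"
    using sum_mono[OF norm_g_sq_le] assms(1) unfolding G_def bounded_noise_def by fastforce
  also have "\<dots> = G_max - 4 * ((1 + \<sigma>1\<^sup>2) * (\<eta>\<^sup>2 * \<beta>\<^sup>2 * T ^ 3))"
    unfolding G_max_def by (simp add: algebra_simps power2_eq_square power3_eq_cube)
  moreover have "0 \<le> (1 + \<sigma>1\<^sup>2) * (\<eta>\<^sup>2 * \<beta>\<^sup>2 * T ^ 3)"
    by (intro mult_nonneg_nonneg add_nonneg_nonneg) auto
  ultimately show ?thesis by linarith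
qed

lemma C1_nonneg: "C1 \<ge> 0"
proof -
  have "G_max \<ge> 0"
    unfolding G_max_def using \<Delta>1_nonneg \<beta>_nonneg by (intro add_nonneg_nonneg mult_nonneg_nonneg) auto
  then show ?thesis unfolding C1_def by (subst zero_le_log_cancel_iff) (auto intro: add_pos_nonneg)
qed

lemma sum_stepsize_sq_norm_g_sq_le:
  assumes "bounded_noise \<omega>" "t \<le> T"
  shows "(\<Sum>s=1..t. (stepsize s \<omega>)\<^sup>2 * (norm (g s \<omega>))\<^sup>2) \<le> \<eta>\<^sup>2 * C1"
proof -
  have "(\<Sum>s=1..t. (stepsize s \<omega>)\<^sup>2 * (norm (g s \<omega>))\<^sup>2)
      = \<eta>\<^sup>2 * (\<Sum>s=1..t. (norm (g s \<omega>))\<^sup>2 / (\<gamma>\<^sup>2 + (\<Sum>r=1..s. (norm (g r \<omega>))\<^sup>2)))"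
    unfolding stepsize_sq G_def by (simp add: sum_distrib_left)
  also have "\<dots> \<le> \<eta>\<^sup>2 * ln ((\<gamma>\<^sup>2 + G t \<omega>) / \<gamma>\<^sup>2)"
    unfolding G_def using \<gamma>_pos by (intro mult_left_mono sum_div_partial_sums_le_ln) auto
  also have "ln ((\<gamma>\<^sup>2 + G t \<omega>) / \<gamma>\<^sup>2) \<le> log 2 (1 + G t \<omega> / \<gamma>\<^sup>2)"
    using \<gamma>_pos G_nonneg[of t \<omega>] by (simp add: add_divide_distrib ln_le_log2)
  also have "\<dots> \<le> C1"
    unfolding C1_def using G_le_G_max[OF assms] G_nonneg[of t \<omega>] \<gamma>_pos
    by (simp add: add_pos_nonneg divide_right_mono)
  finally show ?thesis by (simp add: mult_left_mono)
qed

text \<open>For \<open>T = 0\<close> these facts hold through the junk values \<open>log 2 0 = ln 0 = 0\<close>.\<close>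

lemma ln_T_div_\<delta>_nonneg: "ln (T / \<delta>) \<ge> 0"
  using \<delta>_pos \<delta>_less_1 by (cases "T = 0") (simp_all add: field_simps)

lemma ln_T_div_\<delta>_le_L: "ln (T / \<delta>) \<le> L"
proof (cases "T = 0")
  case False
  then show ?thesis unfolding L_def using \<delta>_pos \<delta>_less_1 by (intro ln_le_log2) (simp add: field_simps)
next
  case True
  then show ?thesis unfolding L_def by (simp add: log_def)
qed

lemma L_nonneg: "L \<ge> 0"
  using ln_T_div_\<delta>_nonneg ln_T_div_\<delta>_le_L by linarith

lemma F_ge: "F \<ge> 2 * \<Delta>1"
  unfolding F_def using L_nonneg C1_nonneg \<eta>_pos \<beta>_nonneg \<sigma>0_nonneg \<sigma>1_nonneg by simp

lemma F_nonneg: "F \<ge> 0"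
  using F_ge \<Delta>1_nonneg by linarith

lemma \<sigma>sq_nonneg: "\<sigma>sq \<ge> 0"
  unfolding \<sigma>sq_def using F_nonneg \<beta>_nonneg by simp

lemma \<sigma>_nonneg: "\<sigma> \<ge> 0"
  unfolding \<sigma>_def using \<sigma>sq_nonneg by simp

lemma \<sigma>_sq: "\<sigma>\<^sup>2 = \<sigma>sq"
  unfolding \<sigma>_def using \<sigma>sq_nonneg by simp

lemma noise_level_le_\<sigma>:
  assumes "gap t \<omega> \<le> F"
  shows "noise_level t \<omega> \<le> \<sigma>"
proof -
  have "(norm (grad (w t \<omega>)))\<^sup>2 \<le> 2 * \<beta> * (f (w t \<omega>) - fstar)"
    by (rule smooth_norm_grad_sq_le[OF grad smooth fstar_le])
  also have "\<dots> \<le> 2 * \<beta> * F"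
    using assms \<beta>_nonneg unfolding gap_def by (intro mult_left_mono) auto
  finally have "\<sigma>1\<^sup>2 * (norm (grad (w t \<omega>)))\<^sup>2 \<le> \<sigma>1\<^sup>2 * (2 * \<beta> * F)"
    by (rule mult_left_mono) simp
  then show ?thesis
    unfolding noise_level_def \<sigma>_def \<sigma>sq_def by (intro real_sqrt_le_mono add_left_mono) (simp add: mult_ac)
qed

text \<open>\<open>F\<close> is chosen to dominate the bound on the optimality gap that the descent argument
  yields under the hypothesis that all earlier gaps are at most \<open>F\<close>.\<close>

lemma gap_budget_le_F: "\<Delta>1 + \<eta> * \<sigma> * (L + 2 * C1) + \<beta> * \<eta>\<^sup>2 * C1 / 2 \<le> F"
proof -
  have "\<sigma> \<le> sqrt (\<sigma>0\<^sup>2) + sqrt (2 * \<beta> * \<sigma>1\<^sup>2 * F)"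
    unfolding \<sigma>_def \<sigma>sq_def using F_nonneg \<beta>_nonneg by (intro sqrt_add_le_add_sqrt) auto
  also have "\<dots> = \<sigma>0 + \<sigma>1 * sqrt (2 * \<beta>) * sqrt F"
    using \<sigma>0_nonneg \<sigma>1_nonneg by (simp add: real_sqrt_mult)
  finally have \<sigma>_le: "\<sigma> \<le> \<sigma>0 + \<sigma>1 * sqrt (2 * \<beta>) * sqrt F" .
  define A where "A = \<eta> * (L + 2 * C1) * \<sigma>1 * sqrt (2 * \<beta>)"
  have A_sq: "A\<^sup>2 = 2 * (L + 2 * C1)\<^sup>2 * (\<eta>\<^sup>2 * \<beta> * \<sigma>1\<^sup>2)"
    unfolding A_def using \<beta>_nonneg by (simp add: power_mult_distrib)
  have "\<eta> * \<sigma> * (L + 2 * C1) \<le> \<eta> * (\<sigma>0 + \<sigma>1 * sqrt (2 * \<beta>) * sqrt F) * (L + 2 * C1)"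
    using \<sigma>_le \<eta>_pos L_nonneg C1_nonneg by (intro mult_right_mono mult_left_mono) auto
  also have "\<dots> = \<eta> * \<sigma>0 * (L + 2 * C1) + A * sqrt F"
    unfolding A_def by (simp add: algebra_simps)
  also have "A * sqrt F \<le> F / 2 + A\<^sup>2 / 2"
    using sum_squares_ge_zero[of "A - sqrt F" 0] F_nonneg by (simp add: power2_eq_square algebra_simps)
  finally have "\<eta> * \<sigma> * (L + 2 * C1) \<le> \<eta> * \<sigma>0 * (L + 2 * C1) + F / 2 + A\<^sup>2 / 2" by simp
  moreover have "9 * L\<^sup>2 + 16 * C1\<^sup>2 - 2 * (L + 2 * C1)\<^sup>2 = (2 * L - 2 * C1)\<^sup>2 + 3 * L\<^sup>2 + 4 * C1\<^sup>2"
    by (simp add: power2_eq_square algebra_simps)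
  then have "2 * (L + 2 * C1)\<^sup>2 \<le> 9 * L\<^sup>2 + 16 * C1\<^sup>2"
    using zero_le_power2[of "2 * L - 2 * C1"] zero_le_power2[of L] zero_le_power2[of C1] by linarith
  then have "2 * (L + 2 * C1)\<^sup>2 * (\<eta>\<^sup>2 * \<beta> * \<sigma>1\<^sup>2) \<le> (9 * L\<^sup>2 + 16 * C1\<^sup>2) * (\<eta>\<^sup>2 * \<beta> * \<sigma>1\<^sup>2)"
    using \<beta>_nonneg by (intro mult_right_mono) auto
  then have "A\<^sup>2 \<le> (9 * L\<^sup>2 + 16 * C1\<^sup>2) * \<eta>\<^sup>2 * \<beta> * \<sigma>1\<^sup>2"
    unfolding A_sq by (simp add: mult.assoc)
  moreover have "2 * (\<eta> * \<sigma>0 * (L + 2 * C1)) \<le> (3 * L + 4 * C1) * \<eta> * \<sigma>0"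
    using L_nonneg \<eta>_pos \<sigma>0_nonneg by (simp add: algebra_simps)
  moreover have "F = 2 * \<Delta>1 + (3 * L + 4 * C1) * \<eta> * \<sigma>0
                   + (9 * L\<^sup>2 + 16 * C1\<^sup>2) * \<eta>\<^sup>2 * \<beta> * \<sigma>1\<^sup>2 + \<beta> * \<eta>\<^sup>2 * C1"
    unfolding F_def by (simp add: algebra_simps)
  ultimately show ?thesis by linarith
qed

lemma proxy_stepsize_eq:
  "proxy_stepsize t \<omega> = \<eta> / sqrt (\<gamma>\<^sup>2 + G (t - 1) \<omega> + ((norm (grad (w t \<omega>)))\<^sup>2 + (noise_level t \<omega>)\<^sup>2))"
  unfolding proxy_stepsize_def by (simp add: add.assoc)

lemma proxy_stepsize_pos: "proxy_stepsize t \<omega> > 0"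
  unfolding proxy_stepsize_eq using \<eta>_pos \<gamma>_sq_add_G_pos[of "t - 1" \<omega>]
  by (simp add: add_pos_nonneg)

lemma proxy_stepsize_le: "proxy_stepsize t \<omega> \<le> \<eta> / \<gamma>"
proof -
  have "\<gamma> \<le> sqrt (\<gamma>\<^sup>2 + G (t - 1) \<omega> + (norm (grad (w t \<omega>)))\<^sup>2 + (noise_level t \<omega>)\<^sup>2)"
    using \<gamma>_pos G_nonneg[of "t - 1" \<omega>] by (intro real_le_rsqrt) simp
  moreover from this have "0 < sqrt (\<gamma>\<^sup>2 + G (t - 1) \<omega> + (norm (grad (w t \<omega>)))\<^sup>2 + (noise_level t \<omega>)\<^sup>2)"
    using \<gamma>_pos by linarith
  ultimately show ?thesis
    unfolding proxy_stepsize_def using \<eta>_pos \<gamma>_pos by (intro divide_left_mono) auto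
qed

lemma proxy_stepsize_mult_noise_level_le: "proxy_stepsize t \<omega> * noise_level t \<omega> \<le> \<eta>"
proof -
  define D where "D = \<gamma>\<^sup>2 + G (t - 1) \<omega> + (norm (grad (w t \<omega>)))\<^sup>2 + (noise_level t \<omega>)\<^sup>2"
  have "noise_level t \<omega> \<le> sqrt D"
    unfolding D_def using \<gamma>_sq_add_G_pos[of "t - 1" \<omega>] by (intro real_le_rsqrt) simp
  moreover have "D > 0" unfolding D_def using \<gamma>_sq_add_G_pos[of "t - 1" \<omega>] by (simp add: add_pos_nonneg)
  ultimately show ?thesis
    unfolding proxy_stepsize_def D_def[symmetric] using \<eta>_pos by (simp add: divide_le_eq mult_left_mono)
qed

lemma abs_proxy_stepsize_sub_stepsize_le:
  assumes t: "1 \<le> t" and noise: "norm (\<xi> t \<omega>) \<le> noise_level t \<omega>"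
  shows "\<bar>proxy_stepsize t \<omega> - stepsize t \<omega>\<bar>
           \<le> 2 * noise_level t \<omega> * proxy_stepsize t \<omega> * stepsize t \<omega> / \<eta>"
proof -
  define c where "c = \<gamma>\<^sup>2 + G (t - 1) \<omega>"
  define N where "N = norm (grad (w t \<omega>))"
  define S where "S = noise_level t \<omega>"
  define a where "a = c + (norm (g t \<omega>))\<^sup>2"
  define b where "b = c + (N\<^sup>2 + S\<^sup>2)"
  have c: "c > 0" unfolding c_def by (rule \<gamma>_sq_add_G_pos)
  have a: "sqrt a > 0" and b: "sqrt b > 0" unfolding a_def b_def using c by (auto simp: add_pos_nonneg)
  have S: "S \<ge> 0" unfolding S_def by (rule noise_level_nonneg)
  have g_split: "g t \<omega> = grad (w t \<omega>) + \<xi> t \<omega>" unfolding \<xi>_def by simp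
  have "norm (g t \<omega>) \<le> N + S" "N - S \<le> norm (g t \<omega>)"
    using noise norm_triangle_ineq[of "grad (w t \<omega>)" "\<xi> t \<omega>"]
      norm_triangle_ineq4[of "g t \<omega>" "\<xi> t \<omega>"] unfolding N_def S_def g_split by auto
  moreover have "N \<le> sqrt (N\<^sup>2 + S\<^sup>2)" unfolding N_def by (rule real_le_rsqrt) simp
  moreover have "sqrt (N\<^sup>2 + S\<^sup>2) \<le> N + S"
    using S unfolding N_def by (intro real_le_lsqrt) (auto simp: power2_eq_square algebra_simps)
  ultimately have "\<bar>norm (g t \<omega>) - sqrt (N\<^sup>2 + S\<^sup>2)\<bar> \<le> 2 * S"
    unfolding abs_le_iff by linarith
  moreover have "\<bar>sqrt a - sqrt b\<bar> \<le> \<bar>norm (g t \<omega>) - sqrt (N\<^sup>2 + S\<^sup>2)\<bar>"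
    using abs_sqrt_add_diff_le[of c "(norm (g t \<omega>))\<^sup>2" "N\<^sup>2 + S\<^sup>2"] c
    unfolding a_def b_def by simp
  ultimately have diff: "\<bar>sqrt a - sqrt b\<bar> \<le> 2 * S" by linarith
  have e: "stepsize t \<omega> = \<eta> / sqrt a"
    unfolding stepsize_eq a_def c_def G_pred[OF t] by (simp add: add.assoc)
  have h: "proxy_stepsize t \<omega> = \<eta> / sqrt b"
    unfolding proxy_stepsize_eq b_def c_def N_def S_def ..
  have "proxy_stepsize t \<omega> - stepsize t \<omega>
      = proxy_stepsize t \<omega> * stepsize t \<omega> / \<eta> * (sqrt a - sqrt b)"
    unfolding e h using a b \<eta>_pos by (simp add: field_simps)
  then have "\<bar>proxy_stepsize t \<omega> - stepsize t \<omega>\<bar>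
      = proxy_stepsize t \<omega> * stepsize t \<omega> / \<eta> * \<bar>sqrt a - sqrt b\<bar>"
    using proxy_stepsize_pos[of t \<omega>] stepsize_pos[of t \<omega>] \<eta>_pos by (simp add: abs_mult)
  also have "\<dots> \<le> proxy_stepsize t \<omega> * stepsize t \<omega> / \<eta> * (2 * S)"
    unfolding e h using diff a b \<eta>_pos by (intro mult_left_mono) auto
  finally show ?thesis unfolding S_def by (simp add: mult_ac)
qed

lemma stepsize_mismatch_le:
  assumes t: "1 \<le> t" and noise: "norm (\<xi> t \<omega>) \<le> noise_level t \<omega>"
  shows "(proxy_stepsize t \<omega> - stepsize t \<omega>) * (grad (w t \<omega>) \<bullet> g t \<omega>)
           \<le> proxy_stepsize t \<omega> * (norm (grad (w t \<omega>)))\<^sup>2 / 2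
             + 2 * noise_level t \<omega> / \<eta> * ((stepsize t \<omega>)\<^sup>2 * (norm (g t \<omega>))\<^sup>2)"
proof -
  define h where "h = proxy_stepsize t \<omega>"
  define e where "e = stepsize t \<omega>"
  define N where "N = norm (grad (w t \<omega>))"
  define S where "S = noise_level t \<omega>"
  define X where "X = e\<^sup>2 * (norm (g t \<omega>))\<^sup>2"
  define m where "m = S * e * norm (g t \<omega>) / \<eta>"
  have h: "h > 0" unfolding h_def by (rule proxy_stepsize_pos)
  have "(h - e) * (grad (w t \<omega>) \<bullet> g t \<omega>) \<le> \<bar>h - e\<bar> * \<bar>grad (w t \<omega>) \<bullet> g t \<omega>\<bar>"
    by (simp add: abs_mult[symmetric])
  also have "\<dots> \<le> (2 * S * h * e / \<eta>) * (N * norm (g t \<omega>))"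
    using abs_proxy_stepsize_sub_stepsize_le[OF t noise] Cauchy_Schwarz_ineq2
    unfolding h_def e_def S_def N_def by (intro mult_mono) auto
  also have "\<dots> = 2 * h * N * m" unfolding m_def by (simp add: algebra_simps)
  also have "\<dots> \<le> h * N\<^sup>2 / 2 + 2 * (h * m\<^sup>2)"
    using mult_left_mono[OF zero_le_power2[of "N - 2 * m"], of h] h
    by (simp add: power2_eq_square algebra_simps)
  also have "h * m\<^sup>2 = (h * S) * (S * X / \<eta>\<^sup>2)"
    unfolding m_def X_def by (simp add: power2_eq_square field_simps)
  also have "\<dots> \<le> \<eta> * (S * X / \<eta>\<^sup>2)"
    using proxy_stepsize_mult_noise_level_le[of t \<omega>] noise_level_nonneg[of t \<omega>]
    unfolding h_def S_def X_def by (intro mult_right_mono) auto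
  also have "\<eta> * (S * X / \<eta>\<^sup>2) = S / \<eta> * X" using \<eta>_pos by (simp add: power2_eq_square)
  finally show ?thesis unfolding h_def e_def N_def S_def X_def by simp
qed

lemma gap_Suc_le:
  assumes t: "1 \<le> t" and noise: "norm (\<xi> t \<omega>) \<le> noise_level t \<omega>"
  shows "gap (Suc t) \<omega> \<le> gap t \<omega> - proxy_stepsize t \<omega> * (norm (grad (w t \<omega>)))\<^sup>2 / 2
           - proxy_stepsize t \<omega> * (grad (w t \<omega>) \<bullet> \<xi> t \<omega>)
           + (2 * noise_level t \<omega> / \<eta> + \<beta> / 2) * ((stepsize t \<omega>)\<^sup>2 * (norm (g t \<omega>))\<^sup>2)"
proof -
  define h where "h = proxy_stepsize t \<omega>"
  define e where "e = stepsize t \<omega>"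
  define I where "I = grad (w t \<omega>) \<bullet> g t \<omega>"
  define X where "X = e\<^sup>2 * (norm (g t \<omega>))\<^sup>2"
  have "gap (Suc t) \<omega> \<le> gap t \<omega> - e * I + \<beta> / 2 * X"
    using smooth_descent[OF grad smooth, of "w (Suc t) \<omega>" "w t \<omega>"] w_Suc[OF t] stepsize_pos[of t \<omega>]
    unfolding gap_def e_def I_def X_def by (simp add: power_mult_distrib)
  moreover have "h * I = h * (norm (grad (w t \<omega>)))\<^sup>2 + h * (grad (w t \<omega>) \<bullet> \<xi> t \<omega>)"
    unfolding I_def \<xi>_def by (simp add: inner_diff_right power2_norm_eq_inner algebra_simps)
  moreover have "h * I - e * I \<le> h * (norm (grad (w t \<omega>)))\<^sup>2 / 2 + 2 * noise_level t \<omega> / \<eta> * X"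
    using stepsize_mismatch_le[OF t noise] unfolding h_def e_def I_def X_def
    by (simp add: left_diff_distrib)
  moreover have "(2 * noise_level t \<omega> / \<eta> + \<beta> / 2) * X = 2 * noise_level t \<omega> / \<eta> * X + \<beta> / 2 * X"
    by (simp add: distrib_right)
  ultimately show ?thesis unfolding h_def e_def X_def by linarith
qed

lemma grad_borel_measurable [measurable]: "grad \<in> borel_measurable borel"
proof (rule borel_measurable_continuous_onI)
  have "\<beta>-lipschitz_on UNIV grad"
    using smooth \<beta>_nonneg by (intro lipschitz_onI) (auto simp: dist_norm)
  then show "continuous_on UNIV grad" by (rule lipschitz_on_continuous_on)
qed

lemma subalgebra_hist_M: "u \<le> Suc T \<Longrightarrow> subalgebra M (hist M g u)"
  by (intro subalgebra_hist g_measurable) auto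

lemma measurable_hist_M:
  "u \<le> Suc T \<Longrightarrow> h \<in> borel_measurable (hist M g u) \<Longrightarrow> h \<in> borel_measurable M"
  by (rule measurable_from_subalg[OF subalgebra_hist_M])

lemma G_hist: "t < u \<Longrightarrow> G t \<in> borel_measurable (hist M g u)"
  unfolding G_def[abs_def] using measurable_hist[where M = M and g = g and t = u]
  by (intro borel_measurable_sum borel_measurable_power borel_measurable_norm) auto

lemma stepsize_hist: "t < u \<Longrightarrow> stepsize t \<in> borel_measurable (hist M g u)"
proof -
  assume "t < u"
  then have [measurable]: "G t \<in> borel_measurable (hist M g u)" by (rule G_hist)
  have "stepsize t = (\<lambda>\<omega>. \<eta> / sqrt (\<gamma>\<^sup>2 + G t \<omega>))" using stepsize_eq by auto
  also have "\<dots> \<in> borel_measurable (hist M g u)" by measurable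
  finally show ?thesis .
qed

lemma w_hist: "t \<le> u \<Longrightarrow> w t \<in> borel_measurable (hist M g u)"
proof (induction t)
  case 0
  have "w 0 = (\<lambda>_. w1)" by (simp add: fun_eq_iff)
  then show ?case by simp
next
  case (Suc t)
  show ?case
  proof (cases "t = 0")
    case True
    have "w (Suc 0) = (\<lambda>_. w1)" by (simp add: fun_eq_iff)
    then show ?thesis using True by simp
  next
    case False
    have [measurable]: "w t \<in> borel_measurable (hist M g u)" "stepsize t \<in> borel_measurable (hist M g u)"
      "g t \<in> borel_measurable (hist M g u)"
      using Suc False by (auto intro: stepsize_hist measurable_hist)
    have "w (Suc t) = (\<lambda>\<omega>. w t \<omega> - stepsize t \<omega> *\<^sub>R g t \<omega>)" using w_Suc False by auto
    also have "\<dots> \<in> borel_measurable (hist M g u)" by measurable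
    finally show ?thesis .
  qed
qed

lemma grad_w_hist: "t \<le> u \<Longrightarrow> (\<lambda>\<omega>. grad (w t \<omega>)) \<in> borel_measurable (hist M g u)"
  using w_hist by measurable

lemma noise_level_hist: "t \<le> u \<Longrightarrow> noise_level t \<in> borel_measurable (hist M g u)"
  unfolding noise_level_def[abs_def] using grad_w_hist by measurable

lemma proxy_stepsize_hist:
  "1 \<le> t \<Longrightarrow> t \<le> u \<Longrightarrow> proxy_stepsize t \<in> borel_measurable (hist M g u)"
  unfolding proxy_stepsize_def[abs_def] using G_hist[of "t - 1" u] grad_w_hist noise_level_hist
  by measurable

lemma \<xi>_hist: "1 \<le> t \<Longrightarrow> t < u \<Longrightarrow> \<xi> t \<in> borel_measurable (hist M g u)"
  unfolding \<xi>_def[abs_def] using measurable_hist[where M = M and g = g and s = t and t = u] grad_w_hist[of t u] by measurable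

lemma integral_mult_inner_noise_eq_0:
  assumes s: "s \<in> {1..T}" and K: "K \<in> borel_measurable (hist M g s)"
    and K_bound: "AE \<omega> in M. \<bar>K \<omega>\<bar> \<le> D"
  shows "(\<integral>\<omega>. K \<omega> * (\<xi> s \<omega> \<bullet> u) \<partial>M) = 0"
proof -
  have sub: "subalgebra M (hist M g s)" using s by (intro subalgebra_hist_M) auto
  interpret sigma_finite_subalgebra M "hist M g s"
    by (intro finite_measure_subalgebra_is_sigma_finite finite_measure_subalgebra.intro
          finite_measure_subalgebra_axioms.intro sub finite_measure_axioms)
  have [measurable]: "K \<in> borel_measurable M" using s K by (intro measurable_hist_M[of s]) auto
  have [measurable]: "g s \<in> borel_measurable M" using s by (rule g_measurable)
  have [measurable]: "(\<lambda>\<omega>. grad (w s \<omega>)) \<in> borel_measurable M"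
    using s by (intro measurable_hist_M[of s] grad_w_hist) auto
  have [measurable]: "real_cond_exp M (hist M g s) (\<lambda>\<omega>. g s \<omega> \<bullet> u) \<in> borel_measurable M"
    using s by (intro measurable_hist_M[of s] borel_measurable_cond_exp) auto
  have int_g: "integrable M (\<lambda>\<omega>. K \<omega> * (g s \<omega> \<bullet> u))"
  proof (rule Bochner_Integration.integrable_bound[of M "\<lambda>\<omega>. \<bar>D\<bar> * (g s \<omega> \<bullet> u)"])
    show "integrable M (\<lambda>\<omega>. \<bar>D\<bar> * (g s \<omega> \<bullet> u))" using g_integrable[OF s] by auto
    show "AE \<omega> in M. norm (K \<omega> * (g s \<omega> \<bullet> u)) \<le> norm (\<bar>D\<bar> * (g s \<omega> \<bullet> u))"
      using K_bound by eventually_elim (auto simp: abs_mult intro!: mult_right_mono)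
  qed measurable
  have int_grad: "integrable M (\<lambda>\<omega>. K \<omega> * (grad (w s \<omega>) \<bullet> u))"
  proof (rule integrable_const_bound[of _ "\<bar>D\<bar> * (grad_max * norm u)"])
    show "AE \<omega> in M. norm (K \<omega> * (grad (w s \<omega>) \<bullet> u)) \<le> \<bar>D\<bar> * (grad_max * norm u)"
      using K_bound
    proof eventually_elim
      case (elim \<omega>)
      have "\<bar>grad (w s \<omega>) \<bullet> u\<bar> \<le> norm (grad (w s \<omega>)) * norm u" by (rule Cauchy_Schwarz_ineq2)
      also have "\<dots> \<le> grad_max * norm u"
        using s by (intro mult_right_mono norm_grad_w_le) auto
      finally show ?case using elim by (simp add: abs_mult mult_mono)
    qed
  qed measurable
  have "(\<integral>\<omega>. K \<omega> * (g s \<omega> \<bullet> u) \<partial>M)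
      = (\<integral>\<omega>. K \<omega> * real_cond_exp M (hist M g s) (\<lambda>\<omega>. g s \<omega> \<bullet> u) \<omega> \<partial>M)"
    by (rule real_cond_exp_intg(2)[OF int_g K, symmetric]) measurable
  also have "\<dots> = (\<integral>\<omega>. K \<omega> * (grad (w s \<omega>) \<bullet> u) \<partial>M)"
  proof (rule integral_cong_AE)
    show "AE \<omega> in M. K \<omega> * real_cond_exp M (hist M g s) (\<lambda>\<omega>. g s \<omega> \<bullet> u) \<omega>
        = K \<omega> * (grad (w s \<omega>) \<bullet> u)"
      using unbiased[OF s, of u] by eventually_elim simp
  qed measurable
  finally show ?thesis
    using int_g int_grad unfolding \<xi>_def by (simp add: inner_diff_left right_diff_distrib)
qed

lemma integral_inner_noise_eq_0:
  assumes s: "s \<in> {1..T}" and v: "v \<in> borel_measurable (hist M g s)"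
    and v_bound: "AE \<omega> in M. norm (v \<omega>) \<le> D"
  shows "(\<integral>\<omega>. v \<omega> \<bullet> \<xi> s \<omega> \<partial>M) = 0"
proof -
  have [measurable]: "v \<in> borel_measurable M" using s v by (intro measurable_hist_M[of s]) auto
  have [measurable]: "\<xi> s \<in> borel_measurable M"
    using s by (intro measurable_hist_M[of "Suc s"] \<xi>_hist) auto
  have vi: "(\<lambda>\<omega>. v \<omega> \<bullet> i) \<in> borel_measurable (hist M g s)" for i using v by measurable
  have vi_bound: "AE \<omega> in M. \<bar>v \<omega> \<bullet> i\<bar> \<le> D" if i: "i \<in> Basis" for i
    using v_bound
  proof eventually_elim
    case (elim \<omega>)
    with Basis_le_norm[OF i, of "v \<omega>"] show ?case by linarith
  qed
  have int: "integrable M (\<lambda>\<omega>. (v \<omega> \<bullet> i) * (\<xi> s \<omega> \<bullet> i))" if i: "i \<in> Basis" for i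
  proof (rule integrable_const_bound[of _ "D * noise_max"])
    show "AE \<omega> in M. norm ((v \<omega> \<bullet> i) * (\<xi> s \<omega> \<bullet> i)) \<le> D * noise_max"
      using vi_bound[OF i] AE_bounded_noise
    proof eventually_elim
      case (elim \<omega>)
      have "\<bar>\<xi> s \<omega> \<bullet> i\<bar> \<le> norm (\<xi> s \<omega>)" by (rule Basis_le_norm[OF i])
      also have "\<dots> \<le> noise_level s \<omega>" using elim(2) s unfolding bounded_noise_def by blast
      also have "\<dots> \<le> noise_max" using s by (intro noise_level_le_noise_max) auto
      finally have "\<bar>\<xi> s \<omega> \<bullet> i\<bar> \<le> noise_max" .
      moreover have "0 \<le> D" using elim(1) abs_ge_zero[of "v \<omega> \<bullet> i"] by linarith
      ultimately have "\<bar>v \<omega> \<bullet> i\<bar> * \<bar>\<xi> s \<omega> \<bullet> i\<bar> \<le> D * noise_max"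
        using elim(1) by (intro mult_mono) auto
      then show ?case by (simp add: abs_mult)
    qed
  qed measurable
  have "v \<omega> \<bullet> \<xi> s \<omega> = (\<Sum>i\<in>Basis. (v \<omega> \<bullet> i) * (\<xi> s \<omega> \<bullet> i))" for \<omega>
    by (rule euclidean_inner)
  then have "(\<integral>\<omega>. v \<omega> \<bullet> \<xi> s \<omega> \<partial>M) = (\<integral>\<omega>. (\<Sum>i\<in>Basis. (v \<omega> \<bullet> i) * (\<xi> s \<omega> \<bullet> i)) \<partial>M)"
    by simp
  also have "\<dots> = (\<Sum>i\<in>Basis. \<integral>\<omega>. (v \<omega> \<bullet> i) * (\<xi> s \<omega> \<bullet> i) \<partial>M)"
    by (rule Bochner_Integration.integral_sum) (rule int)
  also have "\<dots> = 0"
  proof (rule sum.neutral, rule ballI)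
    fix i :: 'a assume "i \<in> Basis"
    then show "(\<integral>\<omega>. (v \<omega> \<bullet> i) * (\<xi> s \<omega> \<bullet> i) \<partial>M) = 0"
      by (intro integral_mult_inner_noise_eq_0[OF s vi vi_bound])
  qed
  finally show ?thesis .
qed

definition martingale_exponent :: "(nat \<Rightarrow> 'b \<Rightarrow> 'a) \<Rightarrow> real \<Rightarrow> nat \<Rightarrow> 'b \<Rightarrow> real" where
  "martingale_exponent v \<theta> t \<omega> =
     (\<Sum>s=1..t. \<theta> * (v s \<omega> \<bullet> \<xi> s \<omega>) - (\<theta> * norm (v s \<omega>) * noise_level s \<omega>)\<^sup>2 / 2)"

definition concentrated :: "(nat \<Rightarrow> 'b \<Rightarrow> 'a) \<Rightarrow> real \<Rightarrow> 'b \<Rightarrow> bool" where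
  "concentrated v \<theta> \<omega> \<longleftrightarrow> (\<forall>t\<in>{1..T}. martingale_exponent v \<theta> t \<omega> < ln (T / \<delta>))"

text \<open>The weights \<open>\<theta>\<close> of the two concentration events are chosen so that the quadratic term
  of the exponent is absorbed by the descent term \<open>proxy_stepsize s * \<parallel>\<nabla>f\<parallel>\<^sup>2 / 2\<close> and by
  \<open>\<parallel>\<nabla>f\<parallel>\<^sup>2\<close>, respectively.\<close>

abbreviation descent_noise_controlled :: "'b \<Rightarrow> bool" where
  "descent_noise_controlled \<equiv>
     concentrated (\<lambda>s \<omega>. - (proxy_stepsize s \<omega> *\<^sub>R grad (w s \<omega>))) (1 / (\<eta> * \<sigma>))"

abbreviation gradient_noise_controlled :: "'b \<Rightarrow> bool" where
  "gradient_noise_controlled \<equiv> concentrated (\<lambda>s \<omega>. - (2 *\<^sub>R grad (w s \<omega>))) (1 / (2 * \<sigma>sq))"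

lemma pred_concentrated:
  assumes v: "\<And>r s. 1 \<le> r \<Longrightarrow> r \<le> s \<Longrightarrow> s \<le> T \<Longrightarrow> v r \<in> borel_measurable (hist M g s)"
  shows "Measurable.pred M (concentrated v \<theta>)"
proof -
  have [measurable]: "v s \<in> borel_measurable M" if "s \<in> {1..T}" for s
    using that v[of s s] by (intro measurable_hist_M[of s]) auto
  have [measurable]: "\<xi> s \<in> borel_measurable M" if "s \<in> {1..T}" for s
    using that by (intro measurable_hist_M[of "Suc s"] \<xi>_hist) auto
  have [measurable]: "noise_level s \<in> borel_measurable M" if "s \<in> {1..T}" for s
    using that by (intro measurable_hist_M[of s] noise_level_hist) auto
  show ?thesis unfolding concentrated_def martingale_exponent_def by measurable
qed

lemma bounded_martingale_differences_noise:
  assumes \<theta>: "\<theta> \<ge> 0"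
    and v: "\<And>r s. 1 \<le> r \<Longrightarrow> r \<le> s \<Longrightarrow> s \<le> T \<Longrightarrow> v r \<in> borel_measurable (hist M g s)"
    and v_bound: "\<And>s \<omega>. s \<in> {1..T} \<Longrightarrow> norm (v s \<omega>) \<le> V"
  shows "bounded_martingale_differences M (hist M g) (\<lambda>s \<omega>. \<theta> * (v s \<omega> \<bullet> \<xi> s \<omega>))
           (\<lambda>s \<omega>. \<theta> * norm (v s \<omega>) * noise_level s \<omega>) (\<theta> * V * noise_max) T"
proof (intro bounded_martingale_differences.intro bounded_martingale_differences_axioms.intro
    prob_space_M)
  fix s assume s: "s \<in> {1..T}"
  then show "subalgebra M (hist M g s)" by (intro subalgebra_hist_M) auto
  have [measurable]: "v s \<in> borel_measurable M" using s v[of s s] by (intro measurable_hist_M[of s]) auto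
  have [measurable]: "\<xi> s \<in> borel_measurable M" using s by (intro measurable_hist_M[of "Suc s"] \<xi>_hist) auto
  show "(\<lambda>\<omega>. \<theta> * (v s \<omega> \<bullet> \<xi> s \<omega>)) \<in> borel_measurable M" by measurable
  show "AE \<omega> in M. \<bar>\<theta> * (v s \<omega> \<bullet> \<xi> s \<omega>)\<bar> \<le> \<theta> * norm (v s \<omega>) * noise_level s \<omega>
                    \<and> \<theta> * norm (v s \<omega>) * noise_level s \<omega> \<le> \<theta> * V * noise_max"
    using AE_bounded_noise
  proof eventually_elim
    case (elim \<omega>)
    then have "\<bar>v s \<omega> \<bullet> \<xi> s \<omega>\<bar> \<le> norm (v s \<omega>) * noise_level s \<omega>"
      using s by (rule abs_inner_noise_le)
    moreover have "norm (v s \<omega>) * noise_level s \<omega> \<le> V * noise_max"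
      using s v_bound[OF s, of \<omega>] noise_level_le_noise_max[of s \<omega>] noise_level_nonneg[of s \<omega>]
      by (intro mult_mono) (auto intro: order_trans[OF norm_ge_zero])
    ultimately show ?case using \<theta> by (simp add: abs_mult mult.assoc mult_left_mono)
  qed
  fix K :: "'b \<Rightarrow> real" assume K: "K \<in> borel_measurable (hist M g s)" and "\<exists>D. AE \<omega> in M. \<bar>K \<omega>\<bar> \<le> D"
  then obtain D where K_bound: "AE \<omega> in M. \<bar>K \<omega>\<bar> \<le> D" by blast
  have "(\<integral>\<omega>. K \<omega> * (\<theta> * (v s \<omega> \<bullet> \<xi> s \<omega>)) \<partial>M) = (\<integral>\<omega>. (\<theta> * K \<omega>) *\<^sub>R v s \<omega> \<bullet> \<xi> s \<omega> \<partial>M)"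
    by (simp add: mult_ac)
  also have "\<dots> = 0"
  proof (rule integral_inner_noise_eq_0[OF s])
    have [measurable]: "v s \<in> borel_measurable (hist M g s)" using s v[of s s] by auto
    show "(\<lambda>\<omega>. (\<theta> * K \<omega>) *\<^sub>R v s \<omega>) \<in> borel_measurable (hist M g s)"
      using K by measurable
    show "AE \<omega> in M. norm ((\<theta> * K \<omega>) *\<^sub>R v s \<omega>) \<le> \<theta> * D * V"
      using K_bound \<theta> v_bound[OF s]
      by (auto elim!: eventually_mono simp: abs_mult intro!: mult_mono)
  qed
  finally show "(\<integral>\<omega>. K \<omega> * (\<theta> * (v s \<omega> \<bullet> \<xi> s \<omega>)) \<partial>M) = 0" .
next
  fix r s assume "1 \<le> r" "r < s" "s \<le> T"
  then have [measurable]: "v r \<in> borel_measurable (hist M g s)" "\<xi> r \<in> borel_measurable (hist M g s)"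
    using v[of r s] \<xi>_hist[of r s] by auto
  show "(\<lambda>\<omega>. \<theta> * (v r \<omega> \<bullet> \<xi> r \<omega>)) \<in> borel_measurable (hist M g s)" by measurable
next
  fix r s assume "1 \<le> r" "r \<le> s" "s \<le> T"
  then have [measurable]: "v r \<in> borel_measurable (hist M g s)"
    "noise_level r \<in> borel_measurable (hist M g s)"
    using v[of r s] noise_level_hist[of r s] by auto
  show "(\<lambda>\<omega>. \<theta> * norm (v r \<omega>) * noise_level r \<omega>) \<in> borel_measurable (hist M g s)"
    by measurable
qed

lemma prob_not_concentrated_le:
  assumes \<theta>: "\<theta> \<ge> 0"
    and v: "\<And>r s. 1 \<le> r \<Longrightarrow> r \<le> s \<Longrightarrow> s \<le> T \<Longrightarrow> v r \<in> borel_measurable (hist M g s)"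
    and v_bound: "\<And>s \<omega>. s \<in> {1..T} \<Longrightarrow> norm (v s \<omega>) \<le> V"
  shows "prob {\<omega>\<in>space M. \<not> concentrated v \<theta> \<omega>} \<le> \<delta>"
proof -
  interpret bounded_martingale_differences M "hist M g" "\<lambda>s \<omega>. \<theta> * (v s \<omega> \<bullet> \<xi> s \<omega>)"
    "\<lambda>s \<omega>. \<theta> * norm (v s \<omega>) * noise_level s \<omega>" "\<theta> * V * noise_max" T
    by (rule bounded_martingale_differences_noise[OF \<theta> v v_bound])
  have "{\<omega>\<in>space M. \<not> concentrated v \<theta> \<omega>} = {\<omega>\<in>space M. \<exists>t\<in>{1..T}. ln (T / \<delta>) \<le> exponent t \<omega>}"
    unfolding concentrated_def martingale_exponent_def exponent_def by (auto simp: not_less)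
  also have "prob \<dots> \<le> T * exp (- ln (T / \<delta>))" by (rule prob_exists_exponent_ge_le)
  also have "\<dots> \<le> \<delta>" using \<delta>_pos by (cases "T = 0") (simp_all add: exp_minus)
  finally show ?thesis .
qed

lemma sum_inner_noise_le_of_concentrated:
  assumes conc: "concentrated v \<theta> \<omega>" and \<theta>: "\<theta> > 0" and t: "t \<in> {1..T}"
    and quad: "\<And>s. s \<in> {1..t} \<Longrightarrow> (\<theta> * norm (v s \<omega>) * noise_level s \<omega>)\<^sup>2 / 2 \<le> \<theta> * c s"
  shows "(\<Sum>s=1..t. v s \<omega> \<bullet> \<xi> s \<omega>) \<le> (\<Sum>s=1..t. c s) + ln (T / \<delta>) / \<theta>"
proof -
  have "\<theta> * ((\<Sum>s=1..t. v s \<omega> \<bullet> \<xi> s \<omega>) - (\<Sum>s=1..t. c s))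
      = (\<Sum>s=1..t. \<theta> * (v s \<omega> \<bullet> \<xi> s \<omega>) - \<theta> * c s)"
    by (simp add: sum_subtractf sum_distrib_left right_diff_distrib)
  also have "\<dots> \<le> martingale_exponent v \<theta> t \<omega>"
    unfolding martingale_exponent_def using quad by (intro sum_mono) (simp add: algebra_simps)
  also have "\<dots> < ln (T / \<delta>)" using conc t unfolding concentrated_def by blast
  finally show ?thesis using \<theta> by (simp add: field_simps)
qed

lemma noise_vanishes_if_\<sigma>_eq_0:
  assumes "\<sigma> = 0" "bounded_noise \<omega>" "s \<in> {1..T}" "gap s \<omega> \<le> F"
  shows "\<xi> s \<omega> = 0"
  using assms noise_level_le_\<sigma>[of s \<omega>] unfolding bounded_noise_def
  by (metis norm_le_zero_iff order_trans)

lemma sum_proxy_inner_noise_ge: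
  assumes noise: "bounded_noise \<omega>"
    and conc: "descent_noise_controlled \<omega>"
    and t: "t \<in> {1..T}" and gaps: "\<And>s. s \<in> {1..t} \<Longrightarrow> gap s \<omega> \<le> F"
  shows "- (\<Sum>s=1..t. proxy_stepsize s \<omega> * (grad (w s \<omega>) \<bullet> \<xi> s \<omega>))
           \<le> (\<Sum>s=1..t. proxy_stepsize s \<omega> * (norm (grad (w s \<omega>)))\<^sup>2 / 2) + \<eta> * \<sigma> * ln (T / \<delta>)"
proof (cases "\<sigma> = 0")
  case True
  have "(\<Sum>s=1..t. proxy_stepsize s \<omega> * (grad (w s \<omega>) \<bullet> \<xi> s \<omega>)) = 0"
    using t gaps noise_vanishes_if_\<sigma>_eq_0[OF True noise] by (intro sum.neutral) auto
  moreover have "0 \<le> (\<Sum>s=1..t. proxy_stepsize s \<omega> * (norm (grad (w s \<omega>)))\<^sup>2 / 2)"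
    using less_imp_le[OF proxy_stepsize_pos] by (intro sum_nonneg) simp
  ultimately show ?thesis using True by simp
next
  case False
  then have \<sigma>: "\<sigma> > 0" using \<sigma>_nonneg by simp
  have "(\<Sum>s=1..t. - (proxy_stepsize s \<omega> *\<^sub>R grad (w s \<omega>)) \<bullet> \<xi> s \<omega>)
      \<le> (\<Sum>s=1..t. proxy_stepsize s \<omega> * (norm (grad (w s \<omega>)))\<^sup>2 / 2) + ln (T / \<delta>) / (1 / (\<eta> * \<sigma>))"
  proof (rule sum_inner_noise_le_of_concentrated[OF conc _ t])
    fix s assume s: "s \<in> {1..t}"
    define \<theta> where "\<theta> = 1 / (\<eta> * \<sigma>)"
    define h where "h = proxy_stepsize s \<omega>"
    define N where "N = norm (grad (w s \<omega>))"
    define S where "S = noise_level s \<omega>"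
    have h: "h > 0" unfolding h_def by (rule proxy_stepsize_pos)
    have "h * S * S \<le> \<eta> * \<sigma>"
      using proxy_stepsize_mult_noise_level_le[of s \<omega>] noise_level_le_\<sigma>[OF gaps[OF s]]
        noise_level_nonneg[of s \<omega>] \<eta>_pos unfolding h_def S_def by (intro mult_mono) auto
    then have k: "\<theta> * h * S\<^sup>2 \<le> 1"
      unfolding \<theta>_def using \<sigma> \<eta>_pos by (simp add: power2_eq_square field_simps)
    have "(\<theta> * norm (- (h *\<^sub>R grad (w s \<omega>))) * S)\<^sup>2 = (\<theta> * h * S\<^sup>2) * (\<theta> * h * N\<^sup>2)"
      using h unfolding N_def by (simp add: power2_eq_square algebra_simps)
    also have "\<dots> \<le> \<theta> * h * N\<^sup>2"
      using k h \<sigma> \<eta>_pos unfolding \<theta>_def by (intro mult_left_le_one_le) auto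
    finally show "(1 / (\<eta> * \<sigma>) * norm (- (proxy_stepsize s \<omega> *\<^sub>R grad (w s \<omega>))) * noise_level s \<omega>)\<^sup>2 / 2
        \<le> 1 / (\<eta> * \<sigma>) * (proxy_stepsize s \<omega> * (norm (grad (w s \<omega>)))\<^sup>2 / 2)"
      unfolding \<theta>_def h_def N_def S_def by simp
  qed (use \<sigma> \<eta>_pos in simp)
  then show ?thesis by (simp add: sum_negf mult_ac)
qed

lemma gap_Suc_le_F:
  assumes noise: "bounded_noise \<omega>"
    and conc: "descent_noise_controlled \<omega>"
    and t: "t \<in> {1..T}" and gaps: "\<And>s. s \<in> {1..t} \<Longrightarrow> gap s \<omega> \<le> F"
  shows "gap (Suc t) \<omega> \<le> F"
proof -
  define P where "P = (\<Sum>s=1..t. proxy_stepsize s \<omega> * (norm (grad (w s \<omega>)))\<^sup>2 / 2)"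
  define X where "X = (\<Sum>s=1..t. proxy_stepsize s \<omega> * (grad (w s \<omega>) \<bullet> \<xi> s \<omega>))"
  define E where "E = (\<Sum>s=1..t. (stepsize s \<omega>)\<^sup>2 * (norm (g s \<omega>))\<^sup>2)"
  have "gap (Suc t) \<omega> - gap 1 \<omega> = (\<Sum>s=1..t. gap (Suc s) \<omega> - gap s \<omega>)"
    using sum_Suc_diff[of 1 t "\<lambda>s. gap s \<omega>"] t by simp
  also have "\<dots> \<le> (\<Sum>s=1..t. - proxy_stepsize s \<omega> * (norm (grad (w s \<omega>)))\<^sup>2 / 2
                   - proxy_stepsize s \<omega> * (grad (w s \<omega>) \<bullet> \<xi> s \<omega>)
                   + (2 * \<sigma> / \<eta> + \<beta> / 2) * ((stepsize s \<omega>)\<^sup>2 * (norm (g s \<omega>))\<^sup>2))"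
  proof (rule sum_mono)
    fix s assume s: "s \<in> {1..t}"
    have "(2 * noise_level s \<omega> / \<eta> + \<beta> / 2) * ((stepsize s \<omega>)\<^sup>2 * (norm (g s \<omega>))\<^sup>2)
        \<le> (2 * \<sigma> / \<eta> + \<beta> / 2) * ((stepsize s \<omega>)\<^sup>2 * (norm (g s \<omega>))\<^sup>2)"
      using noise_level_le_\<sigma>[OF gaps[OF s]] \<eta>_pos
      by (intro mult_right_mono add_right_mono divide_right_mono) auto
    moreover have "norm (\<xi> s \<omega>) \<le> noise_level s \<omega>"
      using noise s t unfolding bounded_noise_def by auto
    ultimately show "gap (Suc s) \<omega> - gap s \<omega> \<le> - proxy_stepsize s \<omega> * (norm (grad (w s \<omega>)))\<^sup>2 / 2
        - proxy_stepsize s \<omega> * (grad (w s \<omega>) \<bullet> \<xi> s \<omega>)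
        + (2 * \<sigma> / \<eta> + \<beta> / 2) * ((stepsize s \<omega>)\<^sup>2 * (norm (g s \<omega>))\<^sup>2)"
      using gap_Suc_le[of s \<omega>] s by fastforce
  qed
  also have "\<dots> = - P - X + (2 * \<sigma> / \<eta> + \<beta> / 2) * E"
    unfolding P_def X_def E_def by (simp add: sum.distrib sum_subtractf sum_negf sum_distrib_left)
  also have "\<dots> \<le> \<eta> * \<sigma> * ln (T / \<delta>) + (2 * \<sigma> / \<eta> + \<beta> / 2) * (\<eta>\<^sup>2 * C1)"
  proof -
    have "E \<le> \<eta>\<^sup>2 * C1" unfolding E_def using sum_stepsize_sq_norm_g_sq_le[OF noise] t by simp
    then have "(2 * \<sigma> / \<eta> + \<beta> / 2) * E \<le> (2 * \<sigma> / \<eta> + \<beta> / 2) * (\<eta>\<^sup>2 * C1)"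
      using \<sigma>_nonneg \<eta>_pos \<beta>_nonneg by (intro mult_left_mono) auto
    with sum_proxy_inner_noise_ge[OF noise conc t gaps] show ?thesis
      unfolding P_def X_def by linarith
  qed
  also have "\<dots> = \<eta> * \<sigma> * (ln (T / \<delta>) + 2 * C1) + \<beta> * \<eta>\<^sup>2 * C1 / 2"
    using \<eta>_pos by (simp add: algebra_simps power2_eq_square)
  also have "\<dots> \<le> \<eta> * \<sigma> * (L + 2 * C1) + \<beta> * \<eta>\<^sup>2 * C1 / 2"
    using ln_T_div_\<delta>_le_L \<eta>_pos \<sigma>_nonneg by (simp add: mult_left_mono)
  finally show ?thesis
    using gap_budget_le_F unfolding gap_def \<Delta>1_def by simp
qed

lemma gap_le_F:
  assumes noise: "bounded_noise \<omega>"
    and conc: "descent_noise_controlled \<omega>"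
  shows "t \<in> {1..T} \<Longrightarrow> gap t \<omega> \<le> F"
proof (induction t rule: less_induct)
  case (less t)
  show ?case
  proof (cases "t = 1")
    case True
    then show ?thesis using F_ge \<Delta>1_nonneg unfolding gap_def \<Delta>1_def by simp
  next
    case False
    then obtain r where r: "t = Suc r" "r \<in> {1..T}" using less.prems by (cases t) auto
    then show ?thesis using gap_Suc_le_F[OF noise conc r(2)] less.IH by auto
  qed
qed

lemma sum_noise_sq_le_G:
  assumes noise: "bounded_noise \<omega>" and gaps: "\<And>s. s \<in> {1..T} \<Longrightarrow> gap s \<omega> \<le> F"
    and conc: "gradient_noise_controlled \<omega>"
    and t: "t \<le> T"
  shows "(\<Sum>s=1..t. (norm (\<xi> s \<omega>))\<^sup>2) - 2 * \<sigma>sq * ln (T / \<delta>) \<le> G t \<omega>"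
proof (cases "\<sigma> = 0 \<or> t = 0")
  case True
  have "(\<Sum>s=1..t. (norm (\<xi> s \<omega>))\<^sup>2) = 0"
  proof (rule sum.neutral, rule ballI)
    fix s assume s: "s \<in> {1..t}"
    with True have "\<sigma> = 0" by auto
    moreover have "s \<in> {1..T}" using s t by auto
    ultimately show "(norm (\<xi> s \<omega>))\<^sup>2 = 0" using noise_vanishes_if_\<sigma>_eq_0[OF _ noise _ gaps] by simp
  qed
  then show ?thesis
    using G_nonneg[of t \<omega>] mult_nonneg_nonneg[OF \<sigma>sq_nonneg ln_T_div_\<delta>_nonneg] by simp
next
  case False
  then have \<sigma>sq: "\<sigma>sq > 0" unfolding \<sigma>_sq[symmetric] by simp
  from False t have t: "t \<in> {1..T}" by simp
  have quad: "(1 / (2 * \<sigma>sq) * norm (- (2 *\<^sub>R grad (w s \<omega>))) * noise_level s \<omega>)\<^sup>2 / 2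
      \<le> 1 / (2 * \<sigma>sq) * (norm (grad (w s \<omega>)))\<^sup>2" if s: "s \<in> {1..t}" for s
  proof -
    define N where "N = norm (grad (w s \<omega>))"
    define S where "S = noise_level s \<omega>"
    have "S \<le> \<sigma>" unfolding S_def using s t by (intro noise_level_le_\<sigma> gaps) auto
    then have "S\<^sup>2 \<le> \<sigma>sq"
      using power_mono[of S \<sigma> 2] noise_level_nonneg[of s \<omega>] \<sigma>_sq unfolding S_def by simp
    then have "S\<^sup>2 / \<sigma>sq \<le> 1" using \<sigma>sq by simp
    then have "N\<^sup>2 * (S\<^sup>2 / \<sigma>sq) \<le> N\<^sup>2 * 1" by (rule mult_left_mono) simp
    have "(1 / (2 * \<sigma>sq) * norm (- (2 *\<^sub>R grad (w s \<omega>))) * S)\<^sup>2 / 2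
        = 1 / (2 * \<sigma>sq) * (N\<^sup>2 * (S\<^sup>2 / \<sigma>sq))"
      unfolding N_def using \<sigma>sq by (simp add: power2_eq_square field_simps)
    also have "\<dots> \<le> 1 / (2 * \<sigma>sq) * (N\<^sup>2 * 1)"
      using \<sigma>sq by (intro mult_left_mono[OF \<open>N\<^sup>2 * (S\<^sup>2 / \<sigma>sq) \<le> N\<^sup>2 * 1\<close>]) simp
    finally show ?thesis unfolding S_def N_def by simp
  qed
  have "(\<Sum>s=1..t. - (2 *\<^sub>R grad (w s \<omega>)) \<bullet> \<xi> s \<omega>)
      \<le> (\<Sum>s=1..t. (norm (grad (w s \<omega>)))\<^sup>2) + ln (T / \<delta>) / (1 / (2 * \<sigma>sq))"
    by (rule sum_inner_noise_le_of_concentrated[OF conc _ t quad]) (use \<sigma>sq in simp)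
  moreover have "(\<Sum>s=1..t. - (2 *\<^sub>R grad (w s \<omega>)) \<bullet> \<xi> s \<omega>)
      = - 2 * (\<Sum>s=1..t. grad (w s \<omega>) \<bullet> \<xi> s \<omega>)"
    by (simp add: sum_distrib_left)
  moreover note G_eq_sum_grad_noise[of t \<omega>]
  moreover have "ln (T / \<delta>) / (1 / (2 * \<sigma>sq)) = 2 * \<sigma>sq * ln (T / \<delta>)" by simp
  ultimately show ?thesis by linarith
qed

lemma L_ge_1: "\<delta> \<le> 1 / 2 \<Longrightarrow> T \<ge> 1 \<Longrightarrow> L \<ge> 1"
  unfolding L_def using \<delta>_pos by (subst le_log_iff) (auto simp: field_simps)

lemma lagged_sum_bound_le:
  assumes \<delta>: "\<delta> \<le> 1 / 2" and t: "t \<in> {1..T}"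
  shows "(\<eta> / \<gamma>)\<^sup>2 * \<sigma>sq * (2 * ln (T / \<delta>) + 1) + \<eta>\<^sup>2 * ln (1 + t * \<sigma>sq / \<gamma>\<^sup>2)
           \<le> 2 * \<eta>\<^sup>2 * log 2 (1 + \<sigma>sq * T / (2 * \<gamma>\<^sup>2)) + 7 * (\<eta> / \<gamma>)\<^sup>2 * \<sigma>sq * L"
proof -
  have "2 * ln (T / \<delta>) + 1 \<le> 7 * L" using ln_T_div_\<delta>_le_L L_ge_1[OF \<delta>] t by auto
  then have "(\<eta> / \<gamma>)\<^sup>2 * \<sigma>sq * (2 * ln (T / \<delta>) + 1) \<le> (\<eta> / \<gamma>)\<^sup>2 * \<sigma>sq * (7 * L)"
    using \<sigma>sq_nonneg by (intro mult_left_mono) auto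
  moreover have "t * \<sigma>sq / \<gamma>\<^sup>2 \<le> T * \<sigma>sq / \<gamma>\<^sup>2"
    using t \<sigma>sq_nonneg by (intro divide_right_mono mult_right_mono) auto
  moreover have "0 \<le> t * \<sigma>sq / \<gamma>\<^sup>2" using \<sigma>sq_nonneg by simp
  ultimately have "ln (1 + t * \<sigma>sq / \<gamma>\<^sup>2) \<le> ln (1 + T * \<sigma>sq / \<gamma>\<^sup>2)" by simp
  also have "\<dots> \<le> 2 * log 2 (1 + \<sigma>sq * T / (2 * \<gamma>\<^sup>2))"
    using ln_add_one_le_log2_half[of "T * \<sigma>sq / \<gamma>\<^sup>2"] \<sigma>sq_nonneg by (simp add: mult_ac)
  finally have "\<eta>\<^sup>2 * ln (1 + t * \<sigma>sq / \<gamma>\<^sup>2) \<le> \<eta>\<^sup>2 * (2 * log 2 (1 + \<sigma>sq * T / (2 * \<gamma>\<^sup>2)))"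
    by (rule mult_left_mono) simp
  with \<open>(\<eta> / \<gamma>)\<^sup>2 * \<sigma>sq * (2 * ln (T / \<delta>) + 1) \<le> (\<eta> / \<gamma>)\<^sup>2 * \<sigma>sq * (7 * L)\<close>
  show ?thesis by (simp add: mult_ac)
qed

lemma weighted_noise_sum_le:
  assumes \<delta>: "\<delta> \<le> 1 / 2" and noise: "bounded_noise \<omega>"
    and gaps: "\<And>s. s \<in> {1..T} \<Longrightarrow> gap s \<omega> \<le> F"
    and conc: "gradient_noise_controlled \<omega>"
    and t: "t \<in> {1..T}"
  shows "(\<Sum>s=1..t. (stepsize (s - 1) \<omega>)\<^sup>2 * (norm (grad (w s \<omega>) - g s \<omega>))\<^sup>2)
           \<le> 2 * \<eta>\<^sup>2 * log 2 (1 + \<sigma>sq * T / (2 * \<gamma>\<^sup>2)) + 7 * (\<eta> / \<gamma>)\<^sup>2 * \<sigma>sq * L"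
proof -
  define K where "K = 2 * \<sigma>sq * ln (T / \<delta>)"
  have "(\<Sum>s=1..t. (stepsize (s - 1) \<omega>)\<^sup>2 * (norm (grad (w s \<omega>) - g s \<omega>))\<^sup>2)
      = \<eta>\<^sup>2 * (\<Sum>s=1..t. (norm (\<xi> s \<omega>))\<^sup>2 / (\<gamma>\<^sup>2 + G (s - 1) \<omega>))"
    unfolding stepsize_sq \<xi>_def by (simp add: sum_distrib_left norm_minus_commute)
  also have "\<dots> \<le> \<eta>\<^sup>2 * ((K + \<sigma>sq) / \<gamma>\<^sup>2 + ln (1 + t * \<sigma>sq / \<gamma>\<^sup>2))"
  proof (intro mult_left_mono sum_div_lagged_partial_sums_le)
    fix s assume s: "1 \<le> s" "s \<le> t"
    then have "(norm (\<xi> s \<omega>))\<^sup>2 \<le> (noise_level s \<omega>)\<^sup>2"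
      using noise t unfolding bounded_noise_def by (auto intro: power_mono)
    also have "\<dots> \<le> \<sigma>\<^sup>2"
      using noise_level_le_\<sigma>[OF gaps] noise_level_nonneg[of s \<omega>] s t by (auto intro: power_mono)
    finally show "0 \<le> (norm (\<xi> s \<omega>))\<^sup>2 \<and> (norm (\<xi> s \<omega>))\<^sup>2 \<le> \<sigma>sq" by (simp add: \<sigma>_sq)
  next
    fix s assume "s < t"
    then show "(\<Sum>r=1..s. (norm (\<xi> r \<omega>))\<^sup>2) - K \<le> G s \<omega> \<and> 0 \<le> G s \<omega>"
      using sum_noise_sq_le_G[OF noise gaps conc, of s] t G_nonneg unfolding K_def by auto
  qed (use \<gamma>_pos \<sigma>sq_nonneg ln_T_div_\<delta>_nonneg in \<open>auto simp: K_def\<close>)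
  also have "\<dots> = (\<eta> / \<gamma>)\<^sup>2 * \<sigma>sq * (2 * ln (T / \<delta>) + 1) + \<eta>\<^sup>2 * ln (1 + t * \<sigma>sq / \<gamma>\<^sup>2)"
    unfolding K_def using \<gamma>_pos by (simp add: field_simps power2_eq_square)
  also have "\<dots> \<le> 2 * \<eta>\<^sup>2 * log 2 (1 + \<sigma>sq * T / (2 * \<gamma>\<^sup>2)) + 7 * (\<eta> / \<gamma>)\<^sup>2 * \<sigma>sq * L"
    using \<delta> t by (rule lagged_sum_bound_le)
  finally show ?thesis .
qed

lemma descent_weights_hist:
  "1 \<le> r \<Longrightarrow> r \<le> s \<Longrightarrow>
     (\<lambda>\<omega>. - (proxy_stepsize r \<omega> *\<^sub>R grad (w r \<omega>))) \<in> borel_measurable (hist M g s)"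
  using proxy_stepsize_hist[of r s] grad_w_hist[of r s] by measurable

lemma gradient_weights_hist:
  "r \<le> s \<Longrightarrow> (\<lambda>\<omega>. - (2 *\<^sub>R grad (w r \<omega>))) \<in> borel_measurable (hist M g s)"
  using grad_w_hist[of r s] by measurable

lemma pred_noise_controlled [measurable]:
  "Measurable.pred M descent_noise_controlled" "Measurable.pred M gradient_noise_controlled"
  using descent_weights_hist gradient_weights_hist by (auto intro!: pred_concentrated)

lemma prob_noise_controlled_ge:
  "prob {\<omega>\<in>space M. descent_noise_controlled \<omega> \<and> gradient_noise_controlled \<omega>} \<ge> 1 - 2 * \<delta>"
proof -
  have "prob {\<omega>\<in>space M. \<not> (descent_noise_controlled \<omega> \<and> gradient_noise_controlled \<omega>)}
      = prob ({\<omega>\<in>space M. \<not> descent_noise_controlled \<omega>} \<union> {\<omega>\<in>space M. \<not> gradient_noise_controlled \<omega>})"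
    by (rule arg_cong[where f = prob]) auto
  also have "\<dots> \<le> prob {\<omega>\<in>space M. \<not> descent_noise_controlled \<omega>}
                 + prob {\<omega>\<in>space M. \<not> gradient_noise_controlled \<omega>}"
    by (rule measure_Un_le) measurable
  also have "\<dots> \<le> \<delta> + \<delta>"
  proof (intro add_mono prob_not_concentrated_le)
    fix s \<omega> assume "s \<in> {1..T}"
    then have N: "norm (grad (w s \<omega>)) \<le> grad_max" by (intro norm_grad_w_le) auto
    then have "proxy_stepsize s \<omega> * norm (grad (w s \<omega>)) \<le> \<eta> / \<gamma> * grad_max"
      using proxy_stepsize_le[of s \<omega>] \<eta>_pos \<gamma>_pos by (intro mult_mono) auto
    then show "norm (- (proxy_stepsize s \<omega> *\<^sub>R grad (w s \<omega>))) \<le> \<eta> / \<gamma> * grad_max"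
      using proxy_stepsize_pos[of s \<omega>] by simp
    show "norm (- (2 *\<^sub>R grad (w s \<omega>))) \<le> 2 * grad_max" using N by simp
  qed (use descent_weights_hist gradient_weights_hist \<eta>_pos \<sigma>_nonneg \<sigma>sq_nonneg in auto)
  finally have "prob {\<omega>\<in>space M. \<not> (descent_noise_controlled \<omega> \<and> gradient_noise_controlled \<omega>)}
      \<le> 2 * \<delta>" by simp
  moreover have "prob {\<omega>\<in>space M. \<not> (descent_noise_controlled \<omega> \<and> gradient_noise_controlled \<omega>)}
      = 1 - prob {\<omega>\<in>space M. descent_noise_controlled \<omega> \<and> gradient_noise_controlled \<omega>}"
    by (rule prob_neg) measurable
  ultimately show ?thesis by linarith
qed

lemma weighted_noise_sum_measurable:
  "t \<le> T \<Longrightarrow>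
     (\<lambda>\<omega>. \<Sum>s=1..t. (stepsize (s - 1) \<omega>)\<^sup>2 * (norm (grad (w s \<omega>) - g s \<omega>))\<^sup>2) \<in> borel_measurable M"
proof (intro borel_measurable_sum)
  fix s assume "t \<le> T" "s \<in> {1..t}"
  then have [measurable]: "stepsize (s - 1) \<in> borel_measurable M"
    "(\<lambda>\<omega>. grad (w s \<omega>)) \<in> borel_measurable M" "g s \<in> borel_measurable M"
    by (auto intro!: measurable_hist_M[of s] stepsize_hist grad_w_hist g_measurable)
  show "(\<lambda>\<omega>. (stepsize (s - 1) \<omega>)\<^sup>2 * (norm (grad (w s \<omega>) - g s \<omega>))\<^sup>2) \<in> borel_measurable M"
    by measurable
qed

theorem prob_weighted_noise_sum_le:
  "prob {\<omega>\<in>space M. \<forall>t\<in>{1..T}.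
      (\<Sum>s=1..t. (stepsize (s - 1) \<omega>)\<^sup>2 * (norm (grad (w s \<omega>) - g s \<omega>))\<^sup>2)
        \<le> 2 * \<eta>\<^sup>2 * log 2 (1 + \<sigma>sq * T / (2 * \<gamma>\<^sup>2)) + 7 * (\<eta> / \<gamma>)\<^sup>2 * \<sigma>sq * L}
   \<ge> 1 - 2 * \<delta>" (is "prob {\<omega>\<in>space M. ?bound \<omega>} \<ge> _")
proof (cases "\<delta> \<le> 1 / 2")
  case True
  have "AE \<omega>\<in>{\<omega>\<in>space M. descent_noise_controlled \<omega> \<and> gradient_noise_controlled \<omega>} in M.
          \<omega> \<in> {\<omega>\<in>space M. ?bound \<omega>}"
    using AE_bounded_noise
  proof eventually_elim
    case (elim \<omega>)
    show ?case
    proof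
      assume \<omega>: "\<omega> \<in> {\<omega>\<in>space M. descent_noise_controlled \<omega> \<and> gradient_noise_controlled \<omega>}"
      then have "\<And>s. s \<in> {1..T} \<Longrightarrow> gap s \<omega> \<le> F" using gap_le_F[OF elim] by blast
      with \<omega> show "\<omega> \<in> {\<omega>\<in>space M. ?bound \<omega>}" using weighted_noise_sum_le[OF True elim] by blast
    qed
  qed
  moreover have [measurable]: "(\<lambda>\<omega>. \<Sum>s=1..t. (stepsize (s - 1) \<omega>)\<^sup>2 * (norm (grad (w s \<omega>) - g s \<omega>))\<^sup>2)
      \<in> borel_measurable M" if "t \<in> {1..T}" for t
    using that by (intro weighted_noise_sum_measurable) auto
  then have "{\<omega>\<in>space M. ?bound \<omega>} \<in> sets M" by measurable
  ultimately have "prob {\<omega>\<in>space M. descent_noise_controlled \<omega> \<and> gradient_noise_controlled \<omega>}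
      \<le> prob {\<omega>\<in>space M. ?bound \<omega>}"
    by (rule finite_measure_mono_AE)
  with prob_noise_controlled_ge show ?thesis by linarith
next
  case False
  have "0 \<le> prob {\<omega>\<in>space M. ?bound \<omega>}" by (rule measure_nonneg)
  with False show ?thesis by linarith
qed

end

theorem lemma16:
  fixes M :: "'b measure"
    and f :: "'a::euclidean_space \<Rightarrow> real" and grad :: "'a \<Rightarrow> 'a"
    and g :: "nat \<Rightarrow> 'b \<Rightarrow> 'a"
    and w1 :: 'a
    and \<beta> fstar \<eta> \<gamma> \<sigma>0 \<sigma>1 \<delta> :: real and T :: nat
  assumes "prob_space M"
    and grad: "\<And>x. (f has_derivative (\<lambda>h. grad x \<bullet> h)) (at x)"
    and smooth: "\<And>x y. norm (grad x - grad y) \<le> \<beta> * norm (x - y)"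
    and fstar_le: "\<And>x. fstar \<le> f x" and fstar_attained: "\<exists>x. f x = fstar"
    and "\<eta> > 0" and "\<gamma> > 0" and "\<sigma>0 \<ge> 0" and "\<sigma>1 \<ge> 0"
    and "0 < \<delta>" and "\<delta> < 1"
    and g_meas: "\<And>t. t \<in> {1..T} \<Longrightarrow> g t \<in> borel_measurable M"
    and g_int: "\<And>t. t \<in> {1..T} \<Longrightarrow> integrable M (g t)"
    and unbiased: "\<And>t u. t \<in> {1..T} \<Longrightarrow>
        AE \<omega> in M. real_cond_exp M (hist M g t) (\<lambda>\<omega>. g t \<omega> \<bullet> u) \<omega>
                     = grad (ada_w \<eta> \<gamma> w1 g t \<omega>) \<bullet> u"
    and noise: "\<And>t. t \<in> {1..T} \<Longrightarrow>
        AE \<omega> in M. (norm (g t \<omega> - grad (ada_w \<eta> \<gamma> w1 g t \<omega>)))\<^sup>2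
                     \<le> \<sigma>0\<^sup>2 + \<sigma>1\<^sup>2 * (norm (grad (ada_w \<eta> \<gamma> w1 g t \<omega>)))\<^sup>2"
  shows "let \<Delta>1 = f w1 - fstar;
             C1 = log 2 (1 + (2 * \<sigma>0\<^sup>2 * T + 8 * (1 + \<sigma>1\<^sup>2) * (\<eta>\<^sup>2 * \<beta>\<^sup>2 * T ^ 3 + \<beta> * \<Delta>1 * T)) / \<gamma>\<^sup>2);
             L = log 2 (T / \<delta>);
             F = 2 * \<Delta>1 + (3 * L + 4 * C1) * \<eta> * \<sigma>0
                 + (9 * L\<^sup>2 + 16 * C1\<^sup>2) * \<eta>\<^sup>2 * \<beta> * \<sigma>1\<^sup>2 + \<eta>\<^sup>2 * \<beta> * C1;
             \<sigma>sq = \<sigma>0\<^sup>2 + 2 * \<beta> * \<sigma>1\<^sup>2 * F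
         in measure M {\<omega> \<in> space M. \<forall>t\<in>{1..T}.
               (\<Sum>s=1..t. (ada_eta \<eta> \<gamma> g (s - 1) \<omega>)\<^sup>2
                           * (norm (grad (ada_w \<eta> \<gamma> w1 g s \<omega>) - g s \<omega>))\<^sup>2)
               \<le> 2 * \<eta>\<^sup>2 * log 2 (1 + \<sigma>sq * T / (2 * \<gamma>\<^sup>2))
                 + 7 * (\<eta> / \<gamma>)\<^sup>2 * \<sigma>sq * L}
            \<ge> 1 - 2 * \<delta>"
proof -
  interpret adasgd M f grad g w1 \<beta> fstar \<eta> \<gamma> \<sigma>0 \<sigma>1 \<delta> T
    by (rule adasgd.intro) (fact assms)+
  show ?thesis
    using prob_weighted_noise_sum_le
    unfolding Let_def \<sigma>sq_def F_def C1_def G_max_def L_def \<Delta>1_def .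
qed

end
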